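(* Consider a system whose communication graph $G$ is a simple cycle, and let $a$ and $b$ be its two rings. Let $N(a)$ and $N(b)$ be the numbers of robots in $a$ and $b$, respectively, in a synchronized communication system on $G$ (before any robot leaves). Then the starvation-number of $G$ is $\max\{N(a),N(b)\}$.
   Context: Model. A system consists of pairwise disjoint unit circles $C_1,\dots,C_n$ in the plane (trajectories) and a communication range $r>0$. Its communication graph $G$ has vertex set $\{C_1,\dots,C_n\}$, $C_i,C_j$ adjacent iff the distance between their centres is at most $2+r$. Positions on a circle are angles (mod $2\pi$). For an edge $(i,j)$, the link position $\phi_{ij}$ is the angle of the point of $C_i$ closest to $C_j$. A schedule $F=(f,g)$ assigns each circle a starting angle $f(C_i)$ and direction $g(C_i)\in\{1,-1\}$; a robot following it on $C_i$ is at $f(C_i)+g(C_i)2\pi t$ at time $t$. $F$ is a synchronization schedule if $g(C_i)=-g(C_j)$ for adjacent circles and robots following $F$ on adjacent $C_i,C_j$ are at $\phi_{ij},\phi_{ji}$ at exactly the same times. A synchronized communication system (SCS) on $G$ consists of $n$ robots, initially one per circle, following a synchronization schedule, with the switching rule: when a robot on $C_i$ reaches $\phi_{ij}$ and $C_j$ is empty, it instantly passes to $C_j$ and follows the schedule of $C_j$; if $C_j$ has a robot, they meet and each stays on its circle. A partial SCS arises by letting some robots leave (possibly at different times). A surviving robot $u$ starves if every time $u$ arrives at a link position $\phi_{ij}$ of its current circle $C_i$, the circle $C_j$ is empty. The starvation-number of $G$ is the maximum possible number of starving robots in a (partial) SCS on $G$. Rings. Given the directions $g$, trace a point moving along a circle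 $C_i$ in direction $g(C_i)$; whenever it reaches a link position $\phi_{ij}$ of its current circle, it passes to $C_j$ at $\phi_{ji}$ and continues in direction $g(C_j)$. The closed curve traced is a ring; the circles decompose into rings overlapping only at link positions. A robot is in a ring if it lies on a point of it. When $G$ is a cycle there are exactly two rings. *)

theory Defs
  imports "HOL-Analysis.Analysis"
begin

text \<open>Circles C_0,...,C_(n-1): unit circles with centres c i (complex plane).
  Angles (mod 2 pi) are represented by the unit complex number cis of the angle.\<close>

definition adj :: "nat \<Rightarrow> (nat \<Rightarrow> complex) \<Rightarrow> real \<Rightarrow> nat \<Rightarrow> nat \<Rightarrow> bool" where
  "adj n c r i j \<longleftrightarrow> i < n \<and> j < n \<and> i \<noteq> j \<and> dist (c i) (c j) \<le> 2 + r"

definition disjoint_circles :: "nat \<Rightarrow> (nat \<Rightarrow> complex) \<Rightarrow> bool" where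
  "disjoint_circles n c \<longleftrightarrow> (\<forall>i<n. \<forall>j<n. i \<noteq> j \<longrightarrow> dist (c i) (c j) > 2)"

definition is_cycle_graph :: "nat \<Rightarrow> (nat \<Rightarrow> complex) \<Rightarrow> real \<Rightarrow> bool" where
  "is_cycle_graph n c r \<longleftrightarrow> n \<ge> 3 \<and>
     (\<exists>\<sigma>. bij_betw \<sigma> {..<n} {..<n} \<and>
        (\<forall>a<n. \<forall>b<n. adj n c r (\<sigma> a) (\<sigma> b) \<longleftrightarrow> (b = Suc a mod n \<or> a = Suc b mod n)))"

definition link_pos :: "(nat \<Rightarrow> complex) \<Rightarrow> nat \<Rightarrow> nat \<Rightarrow> complex" where
  "link_pos c i j = sgn (c j - c i)"

definition sched_ang :: "(nat \<Rightarrow> real) \<Rightarrow> (nat \<Rightarrow> real) \<Rightarrow> nat \<Rightarrow> real \<Rightarrow> complex" where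
  "sched_ang f g i t = cis (f i + g i * (2 * pi * t))"

definition sched_pt :: "(nat \<Rightarrow> complex) \<Rightarrow> (nat \<Rightarrow> real) \<Rightarrow> (nat \<Rightarrow> real) \<Rightarrow> nat \<Rightarrow> real \<Rightarrow> complex" where
  "sched_pt c f g i t = c i + sched_ang f g i t"

definition at_link :: "(nat \<Rightarrow> complex) \<Rightarrow> (nat \<Rightarrow> real) \<Rightarrow> (nat \<Rightarrow> real) \<Rightarrow> nat \<Rightarrow> nat \<Rightarrow> real \<Rightarrow> bool" where
  "at_link c f g i j t \<longleftrightarrow> sched_ang f g i t = link_pos c i j"

definition sync_schedule :: "nat \<Rightarrow> (nat \<Rightarrow> complex) \<Rightarrow> real \<Rightarrow> (nat \<Rightarrow> real) \<Rightarrow> (nat \<Rightarrow> real) \<Rightarrow> bool" where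
  "sync_schedule n c r f g \<longleftrightarrow>
     (\<forall>i<n. g i = 1 \<or> g i = -1) \<and>
     (\<forall>i j. adj n c r i j \<longrightarrow>
        g i = - g j \<and> (\<forall>t. at_link c f g i j t \<longleftrightarrow> at_link c f g j i t))"

text \<open>Configurations: robot k (k < n) is on circle i (Some i) or has left (None).\<close>
type_synonym config = "nat \<Rightarrow> nat option"

definition occupied :: "nat \<Rightarrow> config \<Rightarrow> nat \<Rightarrow> bool" where
  "occupied n P j \<longleftrightarrow> (\<exists>k<n. P k = Some j)"

text \<open>Switching rule at time t: P is the configuration just before t, M just after.\<close>
definition step_ok :: "nat \<Rightarrow> (nat \<Rightarrow> complex) \<Rightarrow> real \<Rightarrow> (nat \<Rightarrow> real) \<Rightarrow> (nat \<Rightarrow> real)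
    \<Rightarrow> config \<Rightarrow> real \<Rightarrow> config \<Rightarrow> bool" where
  "step_ok n c r f g P t M \<longleftrightarrow>
     (\<forall>k<n. (P k = None \<longrightarrow> M k = None) \<and>
       (\<forall>i. P k = Some i \<longrightarrow>
          (if (\<exists>j. adj n c r i j \<and> at_link c f g i j t \<and> \<not> occupied n P j)
           then (\<exists>j. M k = Some j \<and> adj n c r i j \<and> at_link c f g i j t \<and> \<not> occupied n P j)
           else M k = Some i)))"

definition left_state :: "(nat \<Rightarrow> real \<Rightarrow> nat option) \<Rightarrow> nat \<Rightarrow> real \<Rightarrow> nat option" where
  "left_state pos k t = (THE v. eventually (\<lambda>s. pos k s = v) (at_left t))"

text \<open>A run starting at time s0 from configuration P0: pos k t is the circle of robot k
  at time t (right-continuous), None once it has left.  Robots may leave at any time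
  (including s0); switching events happen at times t > s0.\<close>
definition run :: "nat \<Rightarrow> (nat \<Rightarrow> complex) \<Rightarrow> real \<Rightarrow> (nat \<Rightarrow> real) \<Rightarrow> (nat \<Rightarrow> real)
    \<Rightarrow> real \<Rightarrow> config \<Rightarrow> (nat \<Rightarrow> real \<Rightarrow> nat option) \<Rightarrow> bool" where
  "run n c r f g s0 P0 pos \<longleftrightarrow>
     (\<forall>k<n. pos k s0 = P0 k \<or> pos k s0 = None) \<and>
     (\<forall>k<n. \<forall>t\<ge>s0. eventually (\<lambda>s. pos k s = pos k t) (at_right t)) \<and>
     (\<forall>k<n. \<forall>t>s0. \<exists>v. eventually (\<lambda>s. pos k s = v) (at_left t)) \<and>
     (\<forall>t>s0. \<exists>M. step_ok n c r f g (\<lambda>k. left_state pos k t) t M \<and>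
                 (\<forall>k<n. pos k t = M k \<or> pos k t = None))"

definition partial_scs :: "nat \<Rightarrow> (nat \<Rightarrow> complex) \<Rightarrow> real \<Rightarrow> (nat \<Rightarrow> real) \<Rightarrow> (nat \<Rightarrow> real)
    \<Rightarrow> (nat \<Rightarrow> real \<Rightarrow> nat option) \<Rightarrow> bool" where
  "partial_scs n c r f g pos \<longleftrightarrow> run n c r f g 0 (\<lambda>k. Some k) pos"

definition starves :: "nat \<Rightarrow> (nat \<Rightarrow> complex) \<Rightarrow> real \<Rightarrow> (nat \<Rightarrow> real) \<Rightarrow> (nat \<Rightarrow> real)
    \<Rightarrow> (nat \<Rightarrow> real \<Rightarrow> nat option) \<Rightarrow> nat \<Rightarrow> bool" where
  "starves n c r f g pos k \<longleftrightarrow>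
     (\<forall>t\<ge>0. pos k t \<noteq> None) \<and>
     (\<forall>t>0. \<forall>i j. left_state pos k t = Some i \<longrightarrow> adj n c r i j \<longrightarrow> at_link c f g i j t \<longrightarrow>
        \<not> occupied n (\<lambda>m. left_state pos m t) j)"

definition starvation_number :: "nat \<Rightarrow> (nat \<Rightarrow> complex) \<Rightarrow> real \<Rightarrow> (nat \<Rightarrow> real) \<Rightarrow> (nat \<Rightarrow> real) \<Rightarrow> nat" where
  "starvation_number n c r f g =
     Max {card {k. k < n \<and> starves n c r f g pos k} | pos. partial_scs n c r f g pos}"

text \<open>Rings: closure of the plane points traced by a point starting on C_i at a
  non-link position (at schedule time s) that passes at every link position
  (equivalently, a lone robot that never leaves).\<close>
definition is_ring :: "nat \<Rightarrow> (nat \<Rightarrow> complex) \<Rightarrow> real \<Rightarrow> (nat \<Rightarrow> real) \<Rightarrow> (nat \<Rightarrow> real)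
    \<Rightarrow> complex set \<Rightarrow> bool" where
  "is_ring n c r f g R \<longleftrightarrow>
     (\<exists>i<n. \<exists>s. (\<forall>j. adj n c r i j \<longrightarrow> \<not> at_link c f g i j s) \<and>
        (\<exists>pos. run n c r f g s (\<lambda>k. if k = i then Some i else None) pos \<and>
               (\<forall>t\<ge>s. pos i t \<noteq> None) \<and>
               R = closure {sched_pt c f g (the (pos i t)) t | t. t \<ge> s}))"

definition robots_in :: "nat \<Rightarrow> (nat \<Rightarrow> complex) \<Rightarrow> (nat \<Rightarrow> real) \<Rightarrow> (nat \<Rightarrow> real)
    \<Rightarrow> (nat \<Rightarrow> real \<Rightarrow> nat option) \<Rightarrow> real \<Rightarrow> complex set \<Rightarrow> nat" where
  "robots_in n c f g pos t R = card {k. k < n \<and> (\<exists>i. pos k t = Some i \<and> sched_pt c f g i t \<in> R)}"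

end

theory Submission
  imports Defs
begin

text \<open>Number the circles of the cycle as C_(cir q), q \<in> Z mod n, and lift the times at which
  the link between positions q and q+1 is used to an increasing sequence y q with
  y (q+1) < y q + 1. The schedule point of C_(cir q) lies on one ring during [y (q-1), y q) + Z and
  on the other ring otherwise.

  A starving robot never meets anyone, so it moves like a point tracing its ring and stays on that
  ring forever. Two starving robots on different rings move in opposite directions along the cycle;
  following the forward gap between them shows that they must meet, which a starving robot never
  does. So all starving robots share one ring, and by injectivity of configurations there are at
  most as many of them as robots on that ring. Conversely, if exactly the robots of one ring stay,
  none of them ever meets anyone and all of them starve. At a time without link events, robots_in
  counts precisely the circles whose schedule point lies on the given ring.\<close>

lemma real_time_induct:
  fixes P :: "real \<Rightarrow> bool"
  assumes base: "P s0"
    and step: "\<And>\<tau>. \<tau> > s0 \<Longrightarrow> (\<And>s. s0 \<le> s \<Longrightarrow> s < \<tau> \<Longrightarrow> P s) \<Longrightarrow> P \<tau>"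
    and rc: "\<And>\<tau>. \<tau> \<ge> s0 \<Longrightarrow> P \<tau> \<Longrightarrow> eventually P (at_right \<tau>)"
    and "\<tau> \<ge> s0"
  shows "P \<tau>"
proof (rule ccontr)
  assume nP: "\<not> P \<tau>"
  define S where "S = {x. s0 \<le> x \<and> \<not> P x}"
  define T where "T = Inf S"
  have ne: "S \<noteq> {}" using nP assms(4) S_def by auto
  have bdd: "bdd_below S" unfolding S_def by (rule bdd_belowI[of _ s0]) auto
  have lb: "\<And>x. x \<in> S \<Longrightarrow> T \<le> x" unfolding T_def using bdd by (simp add: cInf_lower)
  have Ts0: "s0 \<le> T" unfolding T_def using ne by (rule cInf_greatest) (auto simp: S_def)
  have below: "\<And>s. s0 \<le> s \<Longrightarrow> s < T \<Longrightarrow> P s"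
    using lb S_def by force
  have PT: "P T"
  proof (cases "T = s0")
    case True then show ?thesis using base by simp
  next
    case False then show ?thesis using Ts0 below step by auto
  qed
  have "eventually P (at_right T)" using rc Ts0 PT by auto
  then obtain b where b: "b > T" "\<And>y. y > T \<Longrightarrow> y < b \<Longrightarrow> P y"
    unfolding eventually_at_right[of T "T+1", simplified] by blast
  have "b \<le> T" unfolding T_def
  proof (rule cInf_greatest[OF ne])
    fix x assume x: "x \<in> S"
    show "b \<le> x"
    proof (rule ccontr)
      assume "\<not> b \<le> x"
      moreover have "T \<le> x" using lb x by simp
      moreover have "\<not> P x" using x S_def by auto
      ultimately show False using b PT by (cases "x = T") auto
    qed
  qed
  then show False using b by simp
qed

lemma left_state_eq:
  assumes "eventually (\<lambda>s. pos k s = v) (at_left \<tau>)"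
  shows "left_state pos k \<tau> = v"
  unfolding left_state_def
proof (rule the_equality)
  show "eventually (\<lambda>s. pos k s = v) (at_left \<tau>)" by fact
  fix w assume "eventually (\<lambda>s. pos k s = w) (at_left \<tau>)"
  with assms have "eventually (\<lambda>s. w = v) (at_left \<tau>)"
    by eventually_elim simp
  then show "w = v" using trivial_limit_at_left_real by (simp add: eventually_const_iff)
qed

lemma cis_eq_iff: "cis a = cis b \<longleftrightarrow> (\<exists>k::int. a = b + 2 * pi * k)"
proof -
  have "cis a = cis b \<longleftrightarrow> (\<exists>n::int. \<i> * complex_of_real a = \<i> * complex_of_real b + (of_int (2 * n) * pi) * \<i>)"
    by (simp add: cis_conv_exp exp_eq)
  also have "\<dots> \<longleftrightarrow> (\<exists>k::int. a = b + 2 * pi * k)"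
  proof -
    have "\<And>n::int. (\<i> * complex_of_real a = \<i> * complex_of_real b + (of_int (2 * n) * pi) * \<i>)
       \<longleftrightarrow> a = b + 2 * pi * n"
    proof -
      fix n :: int
      have "(\<i> * complex_of_real a = \<i> * complex_of_real b + (of_int (2 * n) * pi) * \<i>)
        \<longleftrightarrow> \<i> * complex_of_real a = \<i> * complex_of_real (b + 2 * pi * n)"
        by (simp add: algebra_simps)
      also have "\<dots> \<longleftrightarrow> complex_of_real a = complex_of_real (b + 2 * pi * n)" by simp
      also have "\<dots> \<longleftrightarrow> a = b + 2 * pi * n" by (rule of_real_eq_iff)
      finally show "?thesis n" .
    qed
    then show ?thesis by simp
  qed
  finally show ?thesis .
qed

lemma ex_int_shift_iff:
  assumes "b = a + real_of_int j"
  shows "(\<exists>k::int. \<tau> = a + real_of_int k) \<longleftrightarrow> (\<exists>k::int. \<tau> = b + real_of_int k)"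
proof
  assume "\<exists>k::int. \<tau> = a + real_of_int k"
  then obtain k :: int where "\<tau> = a + real_of_int k" by blast
  then show "\<exists>k::int. \<tau> = b + real_of_int k" using assms by (intro exI[of _ "k - j"]) simp
next
  assume "\<exists>k::int. \<tau> = b + real_of_int k"
  then obtain k :: int where "\<tau> = b + real_of_int k" by blast
  then show "\<exists>k::int. \<tau> = a + real_of_int k" using assms by (intro exI[of _ "k + j"]) simp
qed

lemma no_int_between_0_1: fixes x :: int assumes "0 < real_of_int x" "real_of_int x < 1" shows False
proof -
  have "0 < x" using assms(1) by simp
  moreover have "x < 1" using assms(2) by simp
  ultimately show False by simp
qed

lemma no_int_between_m1_0: fixes x :: int assumes "real_of_int x < 0" "-1 < real_of_int x" shows False
  using no_int_between_0_1[of "-x"] assms by simp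

lemma eventually_at_left_ex: "eventually P (at_left (\<tau>::real)) \<Longrightarrow> \<exists>s. P s"
  using eventually_happens trivial_limit_at_left_real by blast

lemma mod_suc_int:
  fixes n :: nat and q :: int
  assumes "n > 0"
  shows "nat ((q + 1) mod int n) = Suc (nat (q mod int n)) mod n"
proof -
  have "int (Suc (nat (q mod int n)) mod n) = (q mod int n + 1) mod int n"
    using assms by (simp add: zmod_int of_nat_Suc add.commute)
  also have "\<dots> = (q + 1) mod int n" by (simp add: mod_add_left_eq)
  finally show ?thesis by (metis nat_int)
qed

lemma mod_pred_int:
  fixes n :: nat and q :: int
  assumes "n > 0" "b < n"
  shows "nat (q mod int n) = Suc b mod n \<longleftrightarrow> b = nat ((q - 1) mod int n)"
proof
  assume a: "nat (q mod int n) = Suc b mod n"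
  then have "q mod int n = (int b + 1) mod int n"
    using assms by (metis int_ops(4) nat_int of_nat_mod pos_mod_sign of_nat_0_less_iff int_nat_eq)
  then have "(q - 1) mod int n = ((int b + 1) - 1) mod int n"
    by (metis mod_diff_left_eq)
  then have "(q - 1) mod int n = int b" using assms by simp
  then show "b = nat ((q - 1) mod int n)" by simp
next
  assume b: "b = nat ((q - 1) mod int n)"
  have "int (Suc b mod n) = (int b + 1) mod int n" by (simp add: zmod_int add.commute)
  also have "int b = (q - 1) mod int n" using b assms by simp
  also have "((q - 1) mod int n + 1) mod int n = q mod int n" by (simp add: mod_add_left_eq)
  finally show "nat (q mod int n) = Suc b mod n" by (metis nat_int)
qed

lemma neg_mod_eq: "(- q) mod int n = (- q') mod int n \<longleftrightarrow> q mod int n = q' mod int n"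
proof -
  have "(- q) mod int n = (- q') mod int n \<longleftrightarrow> int n dvd (- q - (- q'))" by (rule mod_eq_dvd_iff)
  also have "- q - (- q') = - (q - q')" by simp
  also have "int n dvd (- (q - q')) \<longleftrightarrow> int n dvd (q - q')" by (rule dvd_minus_iff)
  also have "\<dots> \<longleftrightarrow> q mod int n = q' mod int n" by (rule mod_eq_dvd_iff[symmetric])
  finally show ?thesis .
qed

lemma adj_sym: "adj n c r i j \<Longrightarrow> adj n c r j i"
  unfolding adj_def by (auto simp: dist_commute)

lemma norm_diff_same_sgn:
  fixes a b :: complex
  assumes "sgn a = sgn b" "cmod a \<le> R" "cmod b \<le> R" "cmod a > 2" "cmod b > 2"
  shows "cmod (a - b) \<le> R - 2"
proof -
  have a: "a = of_real (cmod a) * sgn a" using assms(4)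
    by (simp add: sgn_eq)
  have b: "b = of_real (cmod b) * sgn a" using assms(1,5)
    by (simp add: sgn_eq)
  have "a - b = of_real (cmod a - cmod b) * sgn a"
    using a b by (metis left_diff_distrib of_real_diff)
  then have "cmod (a - b) = \<bar>cmod a - cmod b\<bar> * cmod (sgn a)"
    by (simp only: norm_mult norm_of_real)
  have "a \<noteq> 0" using assms(4) by auto
  then have "cmod (sgn a) = 1" by (simp add: norm_sgn)
  then show ?thesis using assms \<open>cmod (a - b) = \<bar>cmod a - cmod b\<bar> * cmod (sgn a)\<close> by simp
qed

lemma at_link_sym:
  assumes "sync_schedule n c r f g" "adj n c r i j"
  shows "at_link c f g i j \<tau> \<longleftrightarrow> at_link c f g j i \<tau>"
  using assms unfolding sync_schedule_def by blast

text \<open>Two neighbours whose link positions C_j reaches at the same moment lie in the same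
  direction from c j, hence within distance r of each other and adjacent as well; but the three
  directions g of a triangle cannot alternate.\<close>

lemma no_simultaneous_links:
  assumes sync: "sync_schedule n c r f g" and disj: "disjoint_circles n c"
    and a1: "adj n c r j i1" and a2: "adj n c r j i2" and ne: "i1 \<noteq> i2"
    and l1: "at_link c f g j i1 \<tau>" and l2: "at_link c f g j i2 \<tau>"
  shows False
proof -
  have eq: "sgn (c i1 - c j) = sgn (c i2 - c j)"
    using l1 l2 unfolding at_link_def link_pos_def by simp
  have d1: "cmod (c i1 - c j) \<le> 2 + r" "cmod (c i1 - c j) > 2"
    using a1 disj unfolding adj_def disjoint_circles_def by (auto simp: dist_norm norm_minus_commute)
  have d2: "cmod (c i2 - c j) \<le> 2 + r" "cmod (c i2 - c j) > 2"
    using a2 disj unfolding adj_def disjoint_circles_def by (auto simp: dist_norm norm_minus_commute)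
  have "cmod ((c i1 - c j) - (c i2 - c j)) \<le> (2 + r) - 2"
    by (rule norm_diff_same_sgn[OF eq d1(1) d2(1) d1(2) d2(2)])
  then have "dist (c i1) (c i2) \<le> 2 + r" using d1 by (simp add: dist_norm)
  then have a12: "adj n c r i1 i2" using a1 a2 ne unfolding adj_def by auto
  have g: "g i1 = - g j" "g i2 = - g j" "g i1 = - g i2"
  proof -
    have s: "\<And>i j. adj n c r i j \<Longrightarrow> g i = - g j" using sync unfolding sync_schedule_def by blast
    show "g i1 = - g j" using s[OF adj_sym[OF a1]] .
    show "g i2 = - g j" using s[OF adj_sym[OF a2]] .
    show "g i1 = - g i2" using s[OF a12] .
  qed
  have "g i1 = 1 \<or> g i1 = -1" using sync a1 unfolding sync_schedule_def adj_def by auto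
  with g show False by auto
qed

lemma at_link_iff_int_shift:
  assumes "g i = 1 \<or> g i = -1" and "c j \<noteq> c i"
  shows "\<exists>x. \<forall>\<tau>. at_link c f g i j \<tau> \<longleftrightarrow> (\<exists>k::int. \<tau> = x + k)"
proof -
  define \<alpha> where "\<alpha> = Arg (c j - c i)"
  have lp: "link_pos c i j = cis \<alpha>" unfolding link_pos_def \<alpha>_def
    using Arg_correct[of "c j - c i"] assms(2) by simp
  define x where "x = g i * (\<alpha> - f i) / (2 * pi)"
  have "at_link c f g i j \<tau> \<longleftrightarrow> (\<exists>k::int. \<tau> = x + k)" for \<tau>
  proof -
    have "at_link c f g i j \<tau> \<longleftrightarrow> (\<exists>k::int. f i + g i * (2 * pi * \<tau>) = \<alpha> + 2 * pi * k)"
      unfolding at_link_def sched_ang_def lp cis_eq_iff ..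
    also have "\<dots> \<longleftrightarrow> (\<exists>k::int. \<tau> = x + g i * k)"
    proof -
      have "f i + g i * (2 * pi * \<tau>) = \<alpha> + 2 * pi * k \<longleftrightarrow> \<tau> = x + g i * k" for k :: int
        using assms(1)
      proof
        assume g1: "g i = 1"
        show ?thesis unfolding x_def g1 using pi_gt_zero by (simp add: field_simps)
      next
        assume g1: "g i = -1"
        show ?thesis unfolding x_def g1 using pi_gt_zero apply (simp add: field_simps) by auto
      qed
      then show ?thesis by simp
    qed
    also have "\<dots> \<longleftrightarrow> (\<exists>k::int. \<tau> = x + k)"
    proof
      assume "\<exists>k::int. \<tau> = x + g i * k"
      then obtain k :: int where "\<tau> = x + g i * k" by blast
      then show "\<exists>k::int. \<tau> = x + k" using assms(1)
        by (intro exI[of _ "if g i = 1 then k else -k"]) auto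
    next
      assume "\<exists>k::int. \<tau> = x + k"
      then obtain k :: int where "\<tau> = x + k" by blast
      then show "\<exists>k::int. \<tau> = x + g i * k" using assms(1)
        by (intro exI[of _ "if g i = 1 then k else -k"]) auto
    qed
    finally show ?thesis .
  qed
  then show ?thesis by blast
qed

lemma sched_periodic:
  assumes "g i = 1 \<or> g i = -1"
  shows "sched_pt c f g i (\<tau> + real_of_int j) = sched_pt c f g i \<tau>"
proof -
  have "cis (f i + g i * (2 * pi * (\<tau> + real_of_int j))) = cis (f i + g i * (2 * pi * \<tau>))"
    unfolding cis_eq_iff
  proof (intro exI[of _ "if g i = 1 then j else - j"])
    show "f i + g i * (2 * pi * (\<tau> + real_of_int j)) = f i + g i * (2 * pi * \<tau>) + 2 * pi * real_of_int (if g i = 1 then j else - j)"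
      using assms by (auto simp: algebra_simps)
  qed
  then show ?thesis unfolding sched_pt_def sched_ang_def by simp
qed

lemma sched_time:
  assumes "g i = 1 \<or> g i = -1" "sched_pt c f g i t = sched_pt c f g i \<tau>"
  shows "\<exists>j::int. t = \<tau> + j"
proof -
  have "cis (f i + g i * (2 * pi * t)) = cis (f i + g i * (2 * pi * \<tau>))"
    using assms(2) unfolding sched_pt_def sched_ang_def by simp
  then obtain k :: int where k: "f i + g i * (2 * pi * t) = f i + g i * (2 * pi * \<tau>) + 2 * pi * k"
    unfolding cis_eq_iff by blast
  then have "2 * pi * (g i * (t - \<tau>)) = 2 * pi * k" by (simp add: algebra_simps)
  then have "g i * (t - \<tau>) = k" using pi_gt_zero by simp
  then have "t - \<tau> = (if g i = 1 then k else - k)" using assms(1) by auto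
  then show ?thesis by (intro exI[of _ "if g i = 1 then k else - k"]) auto
qed

lemma sched_disjoint:
  assumes "disjoint_circles n c" "i < n" "j < n" "sched_pt c f g i t = sched_pt c f g j \<tau>"
  shows "i = j"
proof (rule ccontr)
  assume ne: "i \<noteq> j"
  have "c i - c j = sched_ang f g j \<tau> - sched_ang f g i t" using assms(4) unfolding sched_pt_def
    by (simp add: algebra_simps)
  then have "cmod (c i - c j) \<le> cmod (sched_ang f g j \<tau>) + cmod (sched_ang f g i t)"
    by (metis norm_triangle_ineq4)
  also have "\<dots> = 2" unfolding sched_ang_def by simp
  finally have "dist (c i) (c j) \<le> 2" by (simp add: dist_norm)
  then show False using assms(1-3) ne unfolding disjoint_circles_def by force
qed

lemma run_right:
  assumes "run n c r f g s0 P0 pos" "\<tau> \<ge> s0"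
  shows "eventually (\<lambda>s. \<forall>k<n. pos k s = pos k \<tau>) (at_right \<tau>)"
proof -
  have "\<forall>k\<in>{..<n}. eventually (\<lambda>s. pos k s = pos k \<tau>) (at_right \<tau>)"
    using assms unfolding run_def by auto
  then have "eventually (\<lambda>s. \<forall>k\<in>{..<n}. pos k s = pos k \<tau>) (at_right \<tau>)"
    by (rule eventually_ball_finite[rotated]) simp
  then show ?thesis by (rule eventually_mono) auto
qed

lemma run_left:
  assumes "run n c r f g s0 P0 pos" "\<tau> > s0"
  shows "eventually (\<lambda>s. s0 < s \<and> s < \<tau> \<and> (\<forall>k<n. pos k s = left_state pos k \<tau>)) (at_left \<tau>)"
proof -
  have "\<forall>k\<in>{..<n}. eventually (\<lambda>s. pos k s = left_state pos k \<tau>) (at_left \<tau>)"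
  proof
    fix k assume "k \<in> {..<n}"
    then have "\<exists>v. eventually (\<lambda>s. pos k s = v) (at_left \<tau>)"
      using assms unfolding run_def by simp
    then obtain v where v: "eventually (\<lambda>s. pos k s = v) (at_left \<tau>)" by blast
    then have "left_state pos k \<tau> = v" by (rule left_state_eq)
    then show "eventually (\<lambda>s. pos k s = left_state pos k \<tau>) (at_left \<tau>)" using v by simp
  qed
  then have "eventually (\<lambda>s. \<forall>k\<in>{..<n}. pos k s = left_state pos k \<tau>) (at_left \<tau>)"
    by (rule eventually_ball_finite[rotated]) simp
  moreover have "eventually (\<lambda>s. s \<in> {s0<..<\<tau>}) (at_left \<tau>)"
    using assms(2) by (rule eventually_at_left_real)
  ultimately show ?thesis by eventually_elim auto
qed

lemma run_step:
  assumes "run n c r f g s0 P0 pos" "\<tau> > s0"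
  shows "\<exists>M. step_ok n c r f g (\<lambda>k. left_state pos k \<tau>) \<tau> M \<and> (\<forall>k<n. pos k \<tau> = M k \<or> pos k \<tau> = None)"
  using assms unfolding run_def by auto

lemma run_start:
  assumes "run n c r f g s0 P0 pos" "k < n"
  shows "pos k s0 = P0 k \<or> pos k s0 = None"
  using assms unfolding run_def by auto

lemma step_none:
  assumes "step_ok n c r f g P \<tau> M" "k < n" "P k = None"
  shows "M k = None"
  using assms unfolding step_ok_def by auto

lemma step_some:
  assumes "step_ok n c r f g P \<tau> M" "k < n" "P k = Some i"
  shows "M k = Some i \<or> (\<exists>j. M k = Some j \<and> adj n c r i j \<and> at_link c f g i j \<tau> \<and> \<not> occupied n P j)"
  using assms unfolding step_ok_def by (cases "\<exists>j. adj n c r i j \<and> at_link c f g i j \<tau> \<and> \<not> occupied n P j") auto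

lemma step_move:
  assumes "step_ok n c r f g P \<tau> M" "k < n" "P k = Some i" "adj n c r i j" "at_link c f g i j \<tau>"
    "\<not> occupied n P j"
  shows "\<exists>j'. M k = Some j' \<and> adj n c r i j' \<and> at_link c f g i j' \<tau>"
proof -
  have C: "\<exists>j. adj n c r i j \<and> at_link c f g i j \<tau> \<and> \<not> occupied n P j" using assms by blast
  have "if (\<exists>j. adj n c r i j \<and> at_link c f g i j \<tau> \<and> \<not> occupied n P j)
           then (\<exists>j. M k = Some j \<and> adj n c r i j \<and> at_link c f g i j \<tau> \<and> \<not> occupied n P j)
           else M k = Some i" using assms(1-3) unfolding step_ok_def by blast
  then show ?thesis using C by (simp only: if_True) blast
qed

lemma step_stay:
  assumes "step_ok n c r f g P \<tau> M" "k < n" "P k = Some i" "\<And>j. adj n c r i j \<Longrightarrow> \<not> at_link c f g i j \<tau>"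
  shows "M k = Some i"
proof -
  have "\<not> (\<exists>j. adj n c r i j \<and> at_link c f g i j \<tau> \<and> \<not> occupied n P j)" using assms(4) by blast
  then show ?thesis using assms(1-3) unfolding step_ok_def by auto
qed

lemma step_moves_to:
  assumes sync: "sync_schedule n c r f g" and disj: "disjoint_circles n c"
    and st: "step_ok n c r f g P \<tau> M" and k: "k < n" and P: "P k = Some i"
    and ad: "adj n c r i j" and al: "at_link c f g i j \<tau>" and free: "\<not> occupied n P j"
  shows "M k = Some j"
proof -
  obtain j' where j': "M k = Some j'" "adj n c r i j'" "at_link c f g i j' \<tau>"
    using step_move[OF st k P ad al free] by blast
  have "j' = j" using no_simultaneous_links[OF sync disj ad j'(2) _ al j'(3)] by blast
  then show ?thesis using j'(1) by simp
qed

definition injective_config :: "nat \<Rightarrow> config \<Rightarrow> bool" where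
  "injective_config n P \<longleftrightarrow> (\<forall>k<n. \<forall>i. P k = Some i \<longrightarrow> i < n) \<and>
      (\<forall>k1<n. \<forall>k2<n. k1 \<noteq> k2 \<longrightarrow> P k1 \<noteq> None \<longrightarrow> P k1 \<noteq> P k2)"

lemma injective_config_drop:
  assumes "injective_config n M" "\<forall>k<n. P k = M k \<or> P k = None"
  shows "injective_config n P"
  using assms unfolding injective_config_def by (metis option.distinct(1))

lemma injective_config_cong:
  assumes "injective_config n M" "\<forall>k<n. P k = M k"
  shows "injective_config n P"
  using assms unfolding injective_config_def by auto

lemma step_ok_injective_config:
  assumes sync: "sync_schedule n c r f g" and disj: "disjoint_circles n c"
    and inj: "injective_config n P" and st: "step_ok n c r f g P \<tau> M"
  shows "injective_config n M"
proof -
  have lt: "\<forall>k<n. \<forall>i. M k = Some i \<longrightarrow> i < n"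
  proof (intro allI impI)
    fix k i assume k: "k < n" and Mk: "M k = Some i"
    show "i < n"
    proof (cases "P k")
      case None then show ?thesis using step_none[OF st k] Mk by simp
    next
      case (Some i0)
      then have "i0 < n" using inj k unfolding injective_config_def by auto
      then show ?thesis using step_some[OF st k Some] Mk unfolding adj_def by auto
    qed
  qed
  have dist: "\<forall>k1<n. \<forall>k2<n. k1 \<noteq> k2 \<longrightarrow> M k1 \<noteq> None \<longrightarrow> M k1 \<noteq> M k2"
  proof (intro allI impI notI)
    fix k1 k2 assume k1: "k1 < n" and k2: "k2 < n" and ne: "k1 \<noteq> k2" and nn: "M k1 \<noteq> None"
      and eq: "M k1 = M k2"
    obtain x where x1: "M k1 = Some x" using nn by auto
    have x2: "M k2 = Some x" using x1 eq by simp
    obtain i1 where i1: "P k1 = Some i1" using step_none[OF st k1] x1 by (cases "P k1") auto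
    obtain i2 where i2: "P k2 = Some i2" using step_none[OF st k2] x2 by (cases "P k2") auto
    have "P k1 \<noteq> P k2" using inj k1 k2 ne i1 unfolding injective_config_def by blast
    then have i12: "i1 \<noteq> i2" using i1 i2 by auto
    have occ1: "occupied n P i1" using k1 i1 unfolding occupied_def by auto
    have occ2: "occupied n P i2" using k2 i2 unfolding occupied_def by auto
    from step_some[OF st k1 i1] step_some[OF st k2 i2] x1 x2 show False
    proof (elim disjE exE conjE)
      assume "M k1 = Some i1" "M k2 = Some i2"
      then show False using x1 x2 i12 by simp
    next
      fix j assume "M k1 = Some i1" "M k2 = Some j" "\<not> occupied n P j"
      then show False using x1 x2 occ1 by simp
    next
      fix j assume "M k1 = Some j" "M k2 = Some i2" "\<not> occupied n P j"
      then show False using x1 x2 occ2 by simp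
    next
      fix j1 j2 assume a: "M k1 = Some j1" "adj n c r i1 j1" "at_link c f g i1 j1 \<tau>"
        "M k2 = Some j2" "adj n c r i2 j2" "at_link c f g i2 j2 \<tau>"
      then have j: "j1 = x" "j2 = x" using x1 x2 by auto
      have b: "adj n c r i1 x" "at_link c f g i1 x \<tau>" "adj n c r i2 x" "at_link c f g i2 x \<tau>"
        using a j by auto
      show False
        using no_simultaneous_links[OF sync disj adj_sym[OF b(1)] adj_sym[OF b(3)] i12]
          at_link_sym[OF sync b(1)] at_link_sym[OF sync b(3)] b by blast
    qed
  qed
  show ?thesis unfolding injective_config_def by (intro conjI lt dist)
qed

lemma run_injective_config:
  assumes sync: "sync_schedule n c r f g" and disj: "disjoint_circles n c"
    and run: "run n c r f g s0 P0 pos" and inj0: "injective_config n P0" and "\<tau> \<ge> s0"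
  shows "injective_config n (\<lambda>k. pos k \<tau>)"
proof (rule real_time_induct[of "\<lambda>\<tau>. injective_config n (\<lambda>k. pos k \<tau>)" s0 \<tau>])
  show "injective_config n (\<lambda>k. pos k s0)" by (rule injective_config_drop[OF inj0]) (use run_start[OF run] in blast)
next
  fix \<tau> :: real assume t: "\<tau> > s0" and IH: "\<And>s. s0 \<le> s \<Longrightarrow> s < \<tau> \<Longrightarrow> injective_config n (\<lambda>k. pos k s)"
  obtain s where s: "s0 < s" "s < \<tau>" "\<forall>k<n. pos k s = left_state pos k \<tau>"
    using eventually_at_left_ex[OF run_left[OF run t]] by blast
  have "injective_config n (\<lambda>k. pos k s)" using s by (intro IH) auto
  then have "injective_config n (\<lambda>k. left_state pos k \<tau>)" by (rule injective_config_cong) (use s(3) in simp)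
  moreover obtain M where M: "step_ok n c r f g (\<lambda>k. left_state pos k \<tau>) \<tau> M"
    "\<forall>k<n. pos k \<tau> = M k \<or> pos k \<tau> = None" using run_step[OF run t] by blast
  ultimately have "injective_config n M" using step_ok_injective_config[OF sync disj] by metis
  then show "injective_config n (\<lambda>k. pos k \<tau>)" using M(2) by (rule injective_config_drop)
next
  fix \<tau> :: real assume t: "\<tau> \<ge> s0" and P: "injective_config n (\<lambda>k. pos k \<tau>)"
  show "eventually (\<lambda>\<tau>. injective_config n (\<lambda>k. pos k \<tau>)) (at_right \<tau>)" using run_right[OF run t]
    by (rule eventually_mono) (rule injective_config_cong[OF P], simp)
qed (rule assms(5))

lemma injective_config_init: "injective_config n (\<lambda>k. Some k)"
  unfolding injective_config_def by auto

lemma absent_stays_absent: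
  assumes run: "run n c r f g s0 P0 pos" and k: "k < n" and P0: "P0 k = None" and t: "\<tau> \<ge> s0"
  shows "pos k \<tau> = None"
proof (rule real_time_induct[of "\<lambda>\<tau>. pos k \<tau> = None" s0 \<tau>])
  show "pos k s0 = None" using run_start[OF run k] P0 by auto
next
  fix \<tau> :: real assume t: "\<tau> > s0" and IH: "\<And>s. s0 \<le> s \<Longrightarrow> s < \<tau> \<Longrightarrow> pos k s = None"
  obtain s where s: "s0 < s" "s < \<tau>" "\<forall>k<n. pos k s = left_state pos k \<tau>"
    using eventually_at_left_ex[OF run_left[OF run t]] by blast
  have "left_state pos k \<tau> = None" using s IH[of s] k by auto
  moreover obtain M where M: "step_ok n c r f g (\<lambda>k. left_state pos k \<tau>) \<tau> M"
    "\<forall>k<n. pos k \<tau> = M k \<or> pos k \<tau> = None" using run_step[OF run t] by blast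
  ultimately have "M k = None" using step_none[OF M(1) k] by simp
  then show "pos k \<tau> = None" using M(2) k by auto
next
  fix \<tau> :: real assume t: "\<tau> \<ge> s0" and P: "pos k \<tau> = None"
  show "eventually (\<lambda>\<tau>. pos k \<tau> = None) (at_right \<tau>)"
    using run_right[OF run t] by (rule eventually_mono) (use P k in auto)
qed (rule t)

lemma absent_left_state:
  assumes run: "run n c r f g s0 P0 pos" and k: "k < n" and P0: "P0 k = None" and t: "\<tau> > s0"
  shows "left_state pos k \<tau> = None"
proof -
  obtain s where s: "s0 < s" "s < \<tau>" "\<forall>k<n. pos k s = left_state pos k \<tau>"
    using eventually_at_left_ex[OF run_left[OF run t]] by blast
  then show ?thesis using absent_stays_absent[OF run k P0, of s] k by auto
qed

lemma scs_config_bij: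
  assumes sync: "sync_schedule n c r f g" and disj: "disjoint_circles n c"
    and ps: "partial_scs n c r f g pos" and alive: "\<forall>k<n. \<forall>s\<ge>0. pos k s \<noteq> None"
    and t: "t \<ge> 0"
  obtains h where "\<And>k. k < n \<Longrightarrow> pos k t = Some (h k)" "bij_betw h {..<n} {..<n}"
proof
  define h where "h k = the (pos k t)" for k
  have run: "run n c r f g 0 (\<lambda>k. Some k) pos" using ps unfolding partial_scs_def .
  have inj: "injective_config n (\<lambda>k. pos k t)"
    using run_injective_config[OF sync disj run injective_config_init t] .
  show ph: "pos k t = Some (h k)" if "k < n" for k using alive that t unfolding h_def by auto
  have "inj_on h {..<n}"
    using inj ph unfolding injective_config_def inj_on_def by (metis lessThan_iff option.distinct(1))
  moreover have "h ` {..<n} \<subseteq> {..<n}" using inj ph unfolding injective_config_def by auto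
  ultimately show "bij_betw h {..<n} {..<n}"
    by (simp add: bij_betw_def card_subset_eq card_image)
qed

lemma robots_in_bij_config:
  assumes "\<And>k. k < n \<Longrightarrow> pos k t = Some (h k)" and "bij_betw h {..<n} {..<n}"
  shows "robots_in n c f g pos t X = card {i. i < n \<and> sched_pt c f g i t \<in> X}"
proof -
  have "{k. k < n \<and> (\<exists>i. pos k t = Some i \<and> sched_pt c f g i t \<in> X)}
      = {k \<in> {..<n}. sched_pt c f g (h k) t \<in> X}"
    using assms(1) by auto
  moreover have "bij_betw h {k \<in> {..<n}. sched_pt c f g (h k) t \<in> X} {i \<in> {..<n}. sched_pt c f g i t \<in> X}"
    using assms(2) by (rule bij_betw_Collect) simp
  ultimately show ?thesis unfolding robots_in_def by (simp add: bij_betw_same_card)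
qed

text \<open>cir q is the circle at position q (mod n) of the cycle; y q is a lifted time at which the
  link between positions q and q+1 is used, all such times being y q + Z.\<close>

locale oriented_cycle =
  fixes n :: nat and c :: "nat \<Rightarrow> complex" and r :: real and f g :: "nat \<Rightarrow> real"
    and cir :: "int \<Rightarrow> nat" and y :: "int \<Rightarrow> real"
  assumes cir_lt: "cir q < n"
    and cir_eq: "cir q = cir q' \<longleftrightarrow> q mod int n = q' mod int n"
    and cir_surj: "i < n \<Longrightarrow> \<exists>q. cir q = i"
    and adj_cir: "adj n c r (cir q) j \<longleftrightarrow> (j = cir (q+1) \<or> j = cir (q-1))"
    and link_fwd: "at_link c f g (cir q) (cir (q+1)) \<tau> \<longleftrightarrow> (\<exists>k::int. \<tau> = y q + k)"
    and link_bwd: "at_link c f g (cir (q+1)) (cir q) \<tau> \<longleftrightarrow> (\<exists>k::int. \<tau> = y q + k)"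
    and y_mono: "y q < y (q+1)"
    and y_step: "y (q+1) < y q + 1"
    and n_ge: "n \<ge> 3"
begin

lemma cir_shift: "cir (q + int n * j) = cir q"
  using cir_eq by simp

lemma cir_congr: assumes "cir q = cir q'" shows "cir (q + d) = cir (q' + d)"
proof -
  have "q mod int n = q' mod int n" using cir_eq assms by blast
  then have "(q + d) mod int n = (q' + d) mod int n" by (rule mod_add_cong) simp
  then show ?thesis using cir_eq by blast
qed

lemma y_strict: "q < q' \<Longrightarrow> y q < y q'"
proof -
  have "y q < y (q + 1 + int d)" for d :: nat
  proof (induction d)
    case 0 then show ?case using y_mono by simp
  next
    case (Suc d)
    have "y (q + 1 + int d) < y (q + 1 + int d + 1)" by (rule y_mono)
    then show ?case using Suc by (simp add: add.assoc)
  qed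
  moreover assume "q < q'"
  then have "q' = q + 1 + int (nat (q' - q - 1))" by simp
  ultimately show "y q < y q'" by metis
qed

lemma y_strict_iff: "y q < y q' \<longleftrightarrow> q < q'"
proof
  assume a: "y q < y q'"
  show "q < q'"
  proof (rule ccontr)
    assume "\<not> q < q'"
    then have "q' < q \<or> q' = q" by auto
    then show False using y_strict[of q' q] a by auto
  qed
qed (rule y_strict)

lemma y_le_iff: "y q \<le> y q' \<longleftrightarrow> q \<le> q'"
proof -
  have "(\<not> y q' < y q) \<longleftrightarrow> (\<not> q' < q)" using y_strict_iff by simp
  then show ?thesis by (simp add: not_less)
qed

lemma y_class:
  assumes "cir q = cir q'"
  shows "\<exists>j::int. y q' = y q + j"
proof -
  have "cir (q'+1) = cir (q+1)" using cir_congr assms by metis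
  have "at_link c f g (cir q') (cir (q'+1)) (y q')"
    using link_fwd[of q' "y q'"] by (auto intro: exI[of _ 0])
  then have "at_link c f g (cir q) (cir (q+1)) (y q')"
    using assms \<open>cir (q'+1) = cir (q+1)\<close> by simp
  then show ?thesis using link_fwd by blast
qed

lemma y_period: "y (q + int n) \<ge> y q + 1"
proof -
  have "cir (q + int n) = cir q" using cir_shift[of q 1] by simp
  then obtain j :: int where j: "y (q + int n) = y q + j" using y_class by metis
  have "y q < y (q + int n)" using n_ge by (intro y_strict) simp
  then have "j \<ge> 1" using j by simp
  then show ?thesis using j by simp
qed

lemma y_period_nat: "y (q + int n * int j) \<ge> y q + j"
proof (induction j)
  case 0 then show ?case by simp
next
  case (Suc j)
  have "y (q + int n * int (Suc j)) = y ((q + int n * int j) + int n)" by (simp add: algebra_simps)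
  also have "\<dots> \<ge> y (q + int n * int j) + 1" by (rule y_period)
  finally show ?case using Suc by simp
qed

lemma y_period_nat_down: "y (q - int n * int j) \<le> y q - j"
  using y_period_nat[of "q - int n * int j" j] by simp

lemma y_unbounded: "\<exists>j::nat. y (q + int n * int j) \<ge> B"
proof -
  obtain j :: nat where "real j \<ge> B - y q" using real_arch_simple by blast
  then show ?thesis using y_period_nat[of q j] by (intro exI[of _ j]) linarith
qed

lemma y_unbounded_down: "\<exists>j::nat. y (q - int n * int j) \<le> B"
proof -
  obtain j :: nat where "real j \<ge> y q - B" using real_arch_simple by blast
  then show ?thesis using y_period_nat_down[of q j] by (intro exI[of _ j]) linarith
qed

lemma ring_idx_ex: "\<exists>q. y (q - 1) \<le> s \<and> s < y q"
proof -
  obtain j1 :: nat where j1: "y (0 - int n * int j1) \<le> s" using y_unbounded_down by blast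
  obtain j2 :: nat where j2: "y (0 + int n * int j2) \<ge> s + 1" using y_unbounded by blast
  define q0 where "q0 = 0 - int n * int j1"
  have ex: "\<exists>d::nat. s < y (q0 + int d)"
  proof -
    have "q0 \<le> int n * int j2" unfolding q0_def by (smt (verit) mult_nonneg_nonneg of_nat_0_le_iff)
    then show ?thesis using j2 by (intro exI[of _ "nat (int n * int j2 - q0)"]) simp
  qed
  define d where "d = (LEAST d::nat. s < y (q0 + int d))"
  have d1: "s < y (q0 + int d)" unfolding d_def using ex by (rule LeastI_ex)
  have "d \<noteq> 0"
  proof
    assume "d = 0"
    then have "s < y q0" using d1 by simp
    then show False using j1 unfolding q0_def by simp
  qed
  then obtain d' where d': "d = Suc d'" using not0_implies_Suc by blast
  have "d' < d" using d' by simp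
  then have "\<not> s < y (q0 + int d')" unfolding d_def by (rule not_less_Least)
  then show ?thesis using d1 d' by (intro exI[of _ "q0 + int d"]) auto
qed

definition ring_idx :: "real \<Rightarrow> int" where
  "ring_idx s = (THE q. y (q - 1) \<le> s \<and> s < y q)"

lemma ring_idx_unique:
  assumes "y (q - 1) \<le> s" "s < y q" "y (q' - 1) \<le> s" "s < y q'"
  shows "q = q'"
proof -
  have "y (q - 1) < y q'" using assms by linarith
  then have "q - 1 < q'" using y_strict_iff by blast
  moreover have "y (q' - 1) < y q" using assms by linarith
  then have "q' - 1 < q" using y_strict_iff by blast
  ultimately show ?thesis by simp
qed

lemma ring_idx_spec: "y (ring_idx s - 1) \<le> s" "s < y (ring_idx s)"
proof -
  obtain q where q: "y (q - 1) \<le> s \<and> s < y q" using ring_idx_ex by blast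
  have "ring_idx s = q" unfolding ring_idx_def
    by (rule the_equality) (use q ring_idx_unique in blast)+
  then show "y (ring_idx s - 1) \<le> s" "s < y (ring_idx s)" using q by auto
qed

lemma ring_idx_eq: "y (q - 1) \<le> s \<Longrightarrow> s < y q \<Longrightarrow> ring_idx s = q"
  using ring_idx_spec ring_idx_unique by blast

lemma ring_idx_ge: "y q \<le> s \<Longrightarrow> q + 1 \<le> ring_idx s"
proof (rule ccontr)
  assume "y q \<le> s" "\<not> q + 1 \<le> ring_idx s"
  then have "ring_idx s \<le> q" by simp
  then have "y (ring_idx s) \<le> y q" using y_le_iff by blast
  then show False using ring_idx_spec[of s] \<open>y q \<le> s\<close> by linarith
qed

lemma ring_idx_at_right: "eventually (\<lambda>s'. ring_idx (s' - m) = ring_idx (\<tau> - m)) (at_right \<tau>)"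
proof -
  have lt: "\<tau> < y (ring_idx (\<tau> - m)) + m" using ring_idx_spec[of "\<tau> - m"] by linarith
  show ?thesis
    unfolding eventually_at_right[OF lt]
  proof (intro exI[of _ "y (ring_idx (\<tau> - m)) + m"] conjI allI impI)
    fix s' assume "s' > \<tau>" "s' < y (ring_idx (\<tau> - m)) + m"
    then show "ring_idx (s' - m) = ring_idx (\<tau> - m)" using ring_idx_spec[of "\<tau> - m"]
      by (intro ring_idx_eq) auto
  qed (rule lt)
qed

definition left_ring_idx :: "real \<Rightarrow> int" where
  "left_ring_idx s = (if s = y (ring_idx s - 1) then ring_idx s - 1 else ring_idx s)"

lemma ring_idx_at_left: "eventually (\<lambda>s'. ring_idx (s' - m) = left_ring_idx (\<tau> - m)) (at_left \<tau>)"
proof (cases "\<tau> - m = y (ring_idx (\<tau> - m) - 1)")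
  case True
  define q where "q = ring_idx (\<tau> - m)"
  have ql: "left_ring_idx (\<tau> - m) = q - 1" using True unfolding left_ring_idx_def q_def by simp
  have yq: "y (q - 1) = \<tau> - m" using True q_def by simp
  have "y (q - 2) < y (q - 1)" by (rule y_strict) simp
  then have lt: "y (q - 2) + m < \<tau>" using yq by linarith
  show ?thesis
    unfolding eventually_at_left[OF lt]
  proof (intro exI[of _ "y (q - 2) + m"] conjI allI impI)
    fix s' assume a: "s' > y (q - 2) + m" "s' < \<tau>"
    have "ring_idx (s' - m) = q - 1"
      by (rule ring_idx_eq) (use a yq in auto)
    then show "ring_idx (s' - m) = left_ring_idx (\<tau> - m)" using ql by simp
  qed (rule lt)
next
  case False
  define q where "q = ring_idx (\<tau> - m)"
  have ql: "left_ring_idx (\<tau> - m) = q" using False unfolding left_ring_idx_def q_def by simp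
  have sp: "y (q - 1) \<le> \<tau> - m" "\<tau> - m < y q" using ring_idx_spec[of "\<tau> - m"] q_def by auto
  have lt: "y (q - 1) + m < \<tau>" using False sp q_def by auto
  show ?thesis
    unfolding eventually_at_left[OF lt]
  proof (intro exI[of _ "y (q - 1) + m"] conjI allI impI)
    fix s' assume a: "s' > y (q - 1) + m" "s' < \<tau>"
    have "ring_idx (s' - m) = q"
      by (rule ring_idx_eq) (use a sp in auto)
    then show "ring_idx (s' - m) = left_ring_idx (\<tau> - m)" using ql by simp
  qed (rule lt)
qed

lemma ring_idx_cases: "ring_idx x = left_ring_idx x \<or> (ring_idx x = left_ring_idx x + 1 \<and> x = y (ring_idx x - 1))"
  unfolding left_ring_idx_def by auto

lemma ring_idx_between:
  assumes "ring_idx x = left_ring_idx x"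
  shows "y (ring_idx x - 1) < x" "x < y (ring_idx x)"
proof -
  have "x \<noteq> y (ring_idx x - 1)" using assms unfolding left_ring_idx_def by auto
  then show "y (ring_idx x - 1) < x" using ring_idx_spec[of x] by auto
  show "x < y (ring_idx x)" using ring_idx_spec[of x] by auto
qed

lemma cir_minus1: "cir q = cir q' \<Longrightarrow> cir (q - 1) = cir (q' - 1)"
  using cir_congr[of q q' "-1"] by simp

lemma y_class2:
  assumes "cir q = cir q'"
  shows "\<exists>j::int. y q' = y q + j \<and> y (q' - 1) = y (q - 1) + j"
proof -
  obtain j :: int where j: "y q' = y q + j" using y_class assms by blast
  obtain j2 :: int where j2: "y (q' - 1) = y (q - 1) + j2" using y_class cir_minus1[OF assms] by blast
  have a: "y (q - 1) < y q" "y q < y (q - 1) + 1" using y_mono[of "q-1"] y_step[of "q-1"] by auto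
  have b: "y (q' - 1) < y q'" "y q' < y (q' - 1) + 1" using y_mono[of "q'-1"] y_step[of "q'-1"] by auto
  have "real_of_int (j - j2) < 1" "real_of_int (j - j2) > -1" using a b j j2 by auto
  then have "j = j2" by linarith
  then show ?thesis using j j2 by auto
qed

text \<open>on_ring i \<tau>: at time \<tau> the schedule point of C_i lies on the ring traced in the direction
  of increasing positions; on_rev_ring: on the other ring.\<close>

definition on_ring :: "nat \<Rightarrow> real \<Rightarrow> bool" where
  "on_ring i \<tau> \<longleftrightarrow> (\<exists>q k::int. cir q = i \<and> y (q - 1) + k \<le> \<tau> \<and> \<tau> < y q + k)"

definition on_rev_ring :: "nat \<Rightarrow> real \<Rightarrow> bool" where
  "on_rev_ring i \<tau> \<longleftrightarrow> (\<exists>q k::int. cir q = i \<and> y q + k \<le> \<tau> \<and> \<tau> < y (q - 1) + 1 + k)"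

lemma on_ring_at: "cir q = i \<Longrightarrow> on_ring i \<tau> \<longleftrightarrow> (\<exists>k::int. y (q - 1) + k \<le> \<tau> \<and> \<tau> < y q + k)"
proof
  assume ci: "cir q = i" and "on_ring i \<tau>"
  then obtain q' and k :: int where q': "cir q' = i" "y (q' - 1) + k \<le> \<tau>" "\<tau> < y q' + k"
    unfolding on_ring_def by blast
  obtain j :: int where "y q = y q' + j \<and> y (q - 1) = y (q' - 1) + j" using y_class2[of q' q] ci q' by auto
  then show "\<exists>k::int. y (q - 1) + k \<le> \<tau> \<and> \<tau> < y q + k"
    using q' by (intro exI[of _ "k - j"]) auto
qed (auto simp: on_ring_def)

lemma on_rev_ring_at: "cir q = i \<Longrightarrow> on_rev_ring i \<tau> \<longleftrightarrow> (\<exists>k::int. y q + k \<le> \<tau> \<and> \<tau> < y (q - 1) + 1 + k)"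
proof
  assume ci: "cir q = i" and "on_rev_ring i \<tau>"
  then obtain q' and k :: int where q': "cir q' = i" "y q' + k \<le> \<tau>" "\<tau> < y (q' - 1) + 1 + k"
    unfolding on_rev_ring_def by blast
  obtain j :: int where "y q = y q' + j \<and> y (q - 1) = y (q' - 1) + j" using y_class2[of q' q] ci q' by auto
  then show "\<exists>k::int. y q + k \<le> \<tau> \<and> \<tau> < y (q - 1) + 1 + k"
    using q' by (intro exI[of _ "k - j"]) auto
qed (auto simp: on_rev_ring_def)

lemma on_rev_ring_iff: "i < n \<Longrightarrow> on_rev_ring i \<tau> \<longleftrightarrow> \<not> on_ring i \<tau>"
proof -
  assume "i < n"
  then obtain q where q: "cir q = i" using cir_surj by blast
  have a: "y (q - 1) < y q" "y q < y (q - 1) + 1" using y_mono[of "q-1"] y_step[of "q-1"] by auto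
  show ?thesis
  proof
    assume "on_rev_ring i \<tau>"
    then obtain k :: int where k: "y q + k \<le> \<tau>" "\<tau> < y (q - 1) + 1 + k" using on_rev_ring_at[OF q] by blast
    show "\<not> on_ring i \<tau>"
    proof
      assume "on_ring i \<tau>"
      then obtain k' :: int where k': "y (q - 1) + k' \<le> \<tau>" "\<tau> < y q + k'" using on_ring_at[OF q] by blast
      have "real_of_int (k' - k) > 0" "real_of_int (k' - k) < 1" using k k' a by auto
      then show False by (rule no_int_between_0_1)
    qed
  next
    assume nl: "\<not> on_ring i \<tau>"
    define k where "k = \<lfloor>\<tau> - y (q - 1)\<rfloor>"
    have k: "y (q - 1) + k \<le> \<tau>" "\<tau> < y (q - 1) + 1 + k" unfolding k_def by linarith+
    have "\<not> \<tau> < y q + k" using nl k(1) on_ring_at[OF q] by blast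
    then have "y q + k \<le> \<tau>" by linarith
    then show "on_rev_ring i \<tau>" unfolding on_rev_ring_at[OF q] using k by blast
  qed
qed

lemma on_ring_ring_idx: "on_ring (cir (ring_idx (\<tau> - real_of_int m))) \<tau>"
  unfolding on_ring_def using ring_idx_spec[of "\<tau> - m"]
  by (intro exI[of _ "ring_idx (\<tau> - m)"] exI[of _ m]) (auto simp: algebra_simps)

lemma no_link_between_link_times:
  assumes "y (q - 1) + real_of_int m < \<tau>" "\<tau> < y q + real_of_int m" "adj n c r (cir q) j"
  shows "\<not> at_link c f g (cir q) j \<tau>"
proof
  assume al: "at_link c f g (cir q) j \<tau>"
  have a: "y (q - 1) < y q" "y q < y (q - 1) + 1" using y_mono[of "q-1"] y_step[of "q-1"] by auto
  from assms(3) have "j = cir (q + 1) \<or> j = cir (q - 1)" using adj_cir by blast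
  then show False
  proof
    assume "j = cir (q + 1)"
    then obtain k :: int where "\<tau> = y q + k" using al link_fwd by blast
    then have "real_of_int (k - m) < 0" "real_of_int (k - m) > -1" using assms a by auto
    then show False by (rule no_int_between_m1_0)
  next
    assume "j = cir (q - 1)"
    then have "at_link c f g (cir ((q - 1) + 1)) (cir (q - 1)) \<tau>" using al by simp
    then obtain k :: int where "\<tau> = y (q - 1) + k" using link_bwd by blast
    then have "real_of_int (k - m) > 0" "real_of_int (k - m) < 1" using assms a by auto
    then show False by (rule no_int_between_0_1)
  qed
qed

lemma link_at_ring_idx_jump:
  assumes "\<tau> - real_of_int m = y (q - 1)"
  shows "adj n c r (cir (q - 1)) (cir q)" "at_link c f g (cir (q - 1)) (cir q) \<tau>"
proof -
  show "adj n c r (cir (q - 1)) (cir q)" using adj_cir[of "q - 1" "cir q"] by simp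
  have "\<exists>k::int. \<tau> = y (q - 1) + k" using assms by (intro exI[of _ m]) simp
  then show "at_link c f g (cir (q - 1)) (cir q) \<tau>" using link_fwd[of "q - 1"] by simp
qed

text \<open>Reading the cycle backwards, C_(cir (-q)) is the q-th circle and the link between positions
  -q-1 and -q is re-lifted by the integer q + 1 so that the lifted link times increase again; this
  orientation traces the other ring.\<close>

abbreviation rev_cir :: "int \<Rightarrow> nat" where "rev_cir \<equiv> \<lambda>q. cir (- q)"

abbreviation rev_y :: "int \<Rightarrow> real" where "rev_y \<equiv> \<lambda>q. y (- q - 1) + q + 1"

lemma reversed_orientation: "oriented_cycle n c r f g rev_cir rev_y"
proof
  fix q q' :: int
  show "cir (- q) < n" by (rule cir_lt)
  show "cir (- q) = cir (- q') \<longleftrightarrow> q mod int n = q' mod int n" using cir_eq neg_mod_eq by blast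
next
  fix i assume "i < n"
  then obtain q where "cir q = i" using cir_surj by blast
  then show "\<exists>q. cir (- q) = i" by (intro exI[of _ "-q"]) simp
next
  fix q :: int and j
  show "adj n c r (cir (- q)) j \<longleftrightarrow> (j = cir (- (q + 1)) \<or> j = cir (- (q - 1)))"
  proof -
    have e: "- (q + 1) = - q - 1" "- (q - 1) = - q + 1" by simp_all
    show ?thesis unfolding e using adj_cir[of "- q" j] by blast
  qed
next
  fix q :: int and \<tau>
  have e: "cir (- q) = cir (- q - 1 + 1)" "cir (- (q + 1)) = cir (- q - 1)" by simp_all
  have shift: "(\<exists>k::int. \<tau> = y (- q - 1) + k) \<longleftrightarrow> (\<exists>k::int. \<tau> = y (- q - 1) + real_of_int q + 1 + k)"
    by (rule ex_int_shift_iff[where j = "q + 1"]) simp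
  show "at_link c f g (cir (- q)) (cir (- (q + 1))) \<tau> \<longleftrightarrow>
      (\<exists>k::int. \<tau> = y (- q - 1) + real_of_int q + 1 + k)"
    unfolding e link_bwd shift ..
  show "at_link c f g (cir (- (q + 1))) (cir (- q)) \<tau> \<longleftrightarrow>
      (\<exists>k::int. \<tau> = y (- q - 1) + real_of_int q + 1 + k)"
    unfolding e link_fwd shift ..
next
  fix q :: int
  have e: "- q - 2 + 1 = - q - 1" "- (q + 1) - 1 = - q - 2" by simp_all
  show "y (- q - 1) + real_of_int q + 1 < y (- (q + 1) - 1) + real_of_int (q + 1) + 1"
    using y_step[of "- q - 2"] unfolding e by simp
  show "y (- (q + 1) - 1) + real_of_int (q + 1) + 1 < y (- q - 1) + real_of_int q + 1 + 1"
    using y_mono[of "- q - 2"] unfolding e by simp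
next
  show "3 \<le> n" by (rule n_ge)
qed

lemma on_ring_reversed: "oriented_cycle.on_ring rev_cir rev_y i \<tau> \<longleftrightarrow> on_rev_ring i \<tau>"
proof -
  interpret R: oriented_cycle n c r f g rev_cir rev_y by (rule reversed_orientation)
  show ?thesis
  proof
    assume "R.on_ring i \<tau>"
    then obtain q and k :: int where a: "cir (- q) = i" "y (- (q - 1) - 1) + real_of_int (q - 1) + 1 + k \<le> \<tau>"
      "\<tau> < y (- q - 1) + real_of_int q + 1 + k" unfolding R.on_ring_def by blast
    have e: "- (q - 1) - 1 = - q" by simp
    show "on_rev_ring i \<tau>" unfolding on_rev_ring_def
      using a unfolding e by (intro exI[of _ "- q"] exI[of _ "k + q"]) (simp add: algebra_simps)
  next
    assume "on_rev_ring i \<tau>"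
    then obtain p and k :: int where a: "cir p = i" "y p + k \<le> \<tau>" "\<tau> < y (p - 1) + 1 + k"
      unfolding on_rev_ring_def by blast
    have e: "- (- p - 1) - 1 = p" "- (- p) - 1 = p - 1" by simp_all
    show "R.on_ring i \<tau>" unfolding R.on_ring_def
      using a by (intro exI[of _ "- p"] exI[of _ "k + p"]) (simp add: algebra_simps e)
  qed
qed

lemma y_shift_const:
  assumes "int n dvd d0"
  shows "y (q + d0) - y q = y (q1 + d0) - y q1"
proof -
  have cir_d: "cir (q + d0) = cir q" for q
    using assms cir_eq by (metis add.commute mod_add_self2 dvd_def mult.commute cir_shift)
  define h where "h q = y (q + d0) - y q" for q
  have hint: "\<exists>k::int. h q = k" for q
  proof -
    obtain j :: int where "y (q + d0) = y q + j" using y_class[of q "q + d0"] cir_d by metis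
    then show ?thesis unfolding h_def by (intro exI[of _ j]) simp
  qed
  have hstep: "h (q + 1) = h q" for q
  proof -
    obtain k1 :: int where k1: "h (q + 1) = k1" using hint by blast
    obtain k2 :: int where k2: "h q = k2" using hint by blast
    have a: "y q < y (q + 1)" "y (q + 1) < y q + 1" by (rule y_mono, rule y_step)
    have b: "y (q + d0) < y (q + d0 + 1)" "y (q + d0 + 1) < y (q + d0) + 1" by (rule y_mono, rule y_step)
    have e: "q + 1 + d0 = q + d0 + 1" by simp
    have "real_of_int (k1 - k2) < 1" "real_of_int (k1 - k2) > -1"
      using a b k1 k2 unfolding h_def e by auto
    then have "k1 = k2" by linarith
    then show ?thesis using k1 k2 by simp
  qed
  have "h q = h q1"
  proof (induction q rule: int_induct[where k = q1])
    case base then show ?case by simp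
  next
    case (step1 i) then show ?case using hstep by simp
  next
    case (step2 i) then show ?case using hstep[of "i - 1"] by simp
  qed
  then show ?thesis unfolding h_def .
qed

lemma circ_ring_idx_determined:
  fixes m1 m2 :: int
  assumes "cir (ring_idx (- real_of_int m1)) = cir (ring_idx (- real_of_int m2))"
  shows "cir (ring_idx (\<tau> - real_of_int m1)) = cir (ring_idx (\<tau> - real_of_int m2))"
proof -
  define q1 where "q1 = ring_idx (- real_of_int m1)"
  define q2 where "q2 = ring_idx (- real_of_int m2)"
  define d0 where "d0 = q2 - q1"
  have "q1 mod int n = q2 mod int n" using assms cir_eq q1_def q2_def by blast
  then have dv: "int n dvd d0" unfolding d0_def by (metis mod_eq_dvd_iff dvd_minus_iff minus_diff_eq)
  obtain D :: int where D: "y (q1 + d0) = y q1 + D"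
    using y_class[of q1 "q1 + d0"] cir_eq dv by (metis (no_types) cir_shift dvd_def)
  have sh: "y (q + d0) = y q + D" for q using y_shift_const[OF dv, of q q1] D by simp
  have s1: "y (q1 - 1) \<le> - real_of_int m1" "- real_of_int m1 < y q1" using ring_idx_spec q1_def by auto
  have s2: "y (q2 - 1) \<le> - real_of_int m2" "- real_of_int m2 < y q2" using ring_idx_spec q2_def by auto
  have y2: "y q2 = y q1 + D" using sh[of q1] unfolding d0_def by simp
  have e3: "q2 - 1 = (q1 - 1) + d0" unfolding d0_def by simp
  have y21: "y (q2 - 1) = y (q1 - 1) + D" unfolding e3 by (rule sh)
  have s2': "y (q1 - 1) + D \<le> - real_of_int m2" "- real_of_int m2 < y q1 + D"
    using s2 y2 y21 by auto
  have a: "y (q1 - 1) < y q1" "y q1 < y (q1 - 1) + 1" using y_mono[of "q1 - 1"] y_step[of "q1 - 1"] by auto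
  have "real_of_int (m1 - m2 - D) < 1" "real_of_int (m1 - m2 - D) > -1" using s1 s2' a by auto
  then have mm: "m1 = m2 + D" by linarith
  define s where "s = \<tau> - real_of_int m1"
  have "ring_idx (s + D) = ring_idx s + d0"
  proof (rule ring_idx_eq)
    show "y (ring_idx s + d0 - 1) \<le> s + D" using sh[of "ring_idx s - 1"] ring_idx_spec[of s] by (simp add: algebra_simps)
    show "s + D < y (ring_idx s + d0)" using sh[of "ring_idx s"] ring_idx_spec[of s] by simp
  qed
  moreover have "\<tau> - real_of_int m2 = s + D" unfolding s_def using mm by simp
  ultimately have "ring_idx (\<tau> - real_of_int m2) = ring_idx s + d0" by simp
  then show ?thesis unfolding s_def using cir_eq dv
    by (metis cir_shift dvd_def)
qed

end

text \<open>rep_seq x picks representatives of the classes x q + Z one after the other, outwards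
  from q = 0, each in the unit interval just above (for q > 0) or just below (for q < 0) the
  previous one.\<close>

definition next_rep :: "real \<Rightarrow> real \<Rightarrow> real" where "next_rep a z = z + real_of_int \<lfloor>a - z\<rfloor> + 1"

definition prev_rep :: "real \<Rightarrow> real \<Rightarrow> real" where "prev_rep a z = z + real_of_int \<lceil>a - z\<rceil> - 1"

lemma next_rep_class: "\<exists>k::int. next_rep a z = z + real_of_int k"
  unfolding next_rep_def by (intro exI[of _ "\<lfloor>a - z\<rfloor> + 1"]) simp

lemma prev_rep_class: "\<exists>k::int. prev_rep a z = z + real_of_int k"
  unfolding prev_rep_def by (intro exI[of _ "\<lceil>a - z\<rceil> - 1"]) simp

lemma next_rep_bounds:
  fixes a z :: real
  assumes "\<not> (\<exists>k::int. a = z + real_of_int k)"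
  shows "a < next_rep a z" "next_rep a z < a + 1"
proof -
  define F where "F = real_of_int \<lfloor>a - z\<rfloor>"
  have ne: "F \<noteq> a - z"
  proof
    assume "F = a - z"
    then have "a = z + F" by simp
    then have "a = z + real_of_int \<lfloor>a - z\<rfloor>" by (simp only: F_def)
    with assms show False by blast
  qed
  have le: "F \<le> a - z" unfolding F_def by (rule of_int_floor_le)
  have gt: "a - z < F + 1" unfolding F_def by (rule real_of_int_floor_add_one_gt)
  have e: "next_rep a z = z + F + 1" unfolding next_rep_def F_def by simp
  from ne le have "F < a - z" by (simp add: less_le)
  then show "a < next_rep a z" "next_rep a z < a + 1" using gt e by linarith+
qed

lemma prev_rep_bounds:
  fixes a z :: real
  assumes "\<not> (\<exists>k::int. a = z + real_of_int k)"
  shows "prev_rep a z < a" "a < prev_rep a z + 1"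
proof -
  define F where "F = real_of_int \<lceil>a - z\<rceil>"
  have ne: "F \<noteq> a - z"
  proof
    assume "F = a - z"
    then have "a = z + F" by simp
    then have "a = z + real_of_int \<lceil>a - z\<rceil>" by (simp only: F_def)
    with assms show False by blast
  qed
  have le: "a - z \<le> F" unfolding F_def by (rule le_of_int_ceiling)
  have gt: "F - 1 < a - z" unfolding F_def using ceiling_correct[of "a - z"] by blast
  have e: "prev_rep a z = z + F - 1" unfolding prev_rep_def F_def by simp
  from ne le have "a - z < F" by (simp add: less_le)
  then show "prev_rep a z < a" "a < prev_rep a z + 1" using gt e by linarith+
qed

fun rep_up :: "(int \<Rightarrow> real) \<Rightarrow> nat \<Rightarrow> real" where
  "rep_up x 0 = x 0"
| "rep_up x (Suc k) = next_rep (rep_up x k) (x (int k + 1))"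

fun rep_down :: "(int \<Rightarrow> real) \<Rightarrow> nat \<Rightarrow> real" where
  "rep_down x 0 = x 0"
| "rep_down x (Suc k) = prev_rep (rep_down x k) (x (- int k - 1))"

definition rep_seq :: "(int \<Rightarrow> real) \<Rightarrow> int \<Rightarrow> real" where
  "rep_seq x q = (if q \<ge> 0 then rep_up x (nat q) else rep_down x (nat (- q)))"

lemma rep_up_class: "\<exists>k::int. rep_up x m = x (int m) + k"
proof (cases m)
  case 0 then show ?thesis by (intro exI[of _ 0]) simp
next
  case (Suc j)
  obtain k :: int where "next_rep (rep_up x j) (x (int j + 1)) = x (int j + 1) + k" using next_rep_class by blast
  then have "rep_up x m = x (int m) + k" using Suc by (simp add: add.commute)
  then show ?thesis by blast
qed

lemma rep_down_class: "\<exists>k::int. rep_down x m = x (- int m) + k"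
proof (cases m)
  case 0 then show ?thesis by (intro exI[of _ 0]) simp
next
  case (Suc j)
  obtain k :: int where "prev_rep (rep_down x j) (x (- int j - 1)) = x (- int j - 1) + k" using prev_rep_class by blast
  moreover have "rep_down x m = prev_rep (rep_down x j) (x (- int j - 1))" using Suc by simp
  ultimately have d: "rep_down x m = x (- int j - 1) + k" by simp
  have e: "- int m = - int j - 1" using Suc by simp
  show ?thesis unfolding e using d by blast
qed

lemma rep_seq_class: "\<exists>k::int. rep_seq x q = x q + k"
proof (cases "q \<ge> 0")
  case True then show ?thesis unfolding rep_seq_def using rep_up_class[of x "nat q"] by simp
next
  case False then show ?thesis unfolding rep_seq_def using rep_down_class[of x "nat (-q)"] by simp
qed

lemma rep_seq_step:
  fixes x :: "int \<Rightarrow> real"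
  assumes sep: "\<And>q a. (\<exists>k::int. a = x q + real_of_int k) \<Longrightarrow> (\<exists>k::int. a = x (q+1) + real_of_int k) \<Longrightarrow> False"
  shows "rep_seq x q < rep_seq x (q + 1) \<and> rep_seq x (q + 1) < rep_seq x q + 1"
proof (cases "q \<ge> 0")
  case True
  have e: "rep_seq x (q + 1) = next_rep (rep_seq x q) (x (q + 1))"
    using True unfolding rep_seq_def by (simp add: nat_add_distrib)
  have "\<not> (\<exists>k::int. rep_seq x q = x (q + 1) + real_of_int k)" using sep[where a = "rep_seq x q" and q = q] rep_seq_class by blast
  then show ?thesis using next_rep_bounds e by simp
next
  case False
  define k where "k = nat (- q - 1)"
  have q: "q = - int k - 1" using False k_def by simp
  have e1: "rep_seq x q = rep_down x (Suc k)" unfolding rep_seq_def using False q by (simp add: nat_add_distrib)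
  have e2: "rep_seq x (q + 1) = rep_down x k"
  proof (cases "k = 0")
    case True then show ?thesis unfolding rep_seq_def using q by simp
  next
    case False then show ?thesis unfolding rep_seq_def using q by simp
  qed
  have e: "rep_seq x q = prev_rep (rep_seq x (q + 1)) (x q)" using e1 e2 q by simp
  have "\<not> (\<exists>k::int. rep_seq x (q + 1) = x q + real_of_int k)" using sep[where a = "rep_seq x (q+1)" and q = q] rep_seq_class by blast
  then show ?thesis using prev_rep_bounds e by simp
qed

lemma cycle_labelling:
  assumes cyc: "is_cycle_graph n c r"
  obtains cir :: "int \<Rightarrow> nat" where "\<And>q. cir q < n"
    and "\<And>q q'. cir q = cir q' \<longleftrightarrow> q mod int n = q' mod int n"
    and "\<And>i. i < n \<Longrightarrow> \<exists>q. cir q = i"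
    and "\<And>q j. adj n c r (cir q) j \<longleftrightarrow> (j = cir (q+1) \<or> j = cir (q-1))"
proof -
  have n0: "n > 0" using cyc unfolding is_cycle_graph_def by simp
  obtain \<sigma> where bij: "bij_betw \<sigma> {..<n} {..<n}"
    and ch0: "\<forall>a<n. \<forall>b<n. adj n c r (\<sigma> a) (\<sigma> b) \<longleftrightarrow> (b = Suc a mod n \<or> a = Suc b mod n)"
    using cyc unfolding is_cycle_graph_def by blast
  have ch: "\<And>a b. a < n \<Longrightarrow> b < n \<Longrightarrow> adj n c r (\<sigma> a) (\<sigma> b) \<longleftrightarrow> (b = Suc a mod n \<or> a = Suc b mod n)"
    using ch0 by blast
  have inj: "inj_on \<sigma> {..<n}" using bij_betw_imp_inj_on[OF bij] .
  have img: "\<sigma> ` {..<n} = {..<n}" using bij_betw_imp_surj_on[OF bij] .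
  define cir where "cir q = \<sigma> (nat (q mod int n))" for q :: int
  have natlt: "nat (q mod int n) < n" for q :: int
  proof -
    have "0 \<le> q mod int n" "q mod int n < int n" using n0 by simp_all
    then show ?thesis by (simp add: nat_less_iff)
  qed
  have cir_lt: "cir q < n" for q using natlt img unfolding cir_def by blast
  have cir_eq: "cir q = cir q' \<longleftrightarrow> q mod int n = q' mod int n" for q q'
  proof
    assume "cir q = cir q'"
    then have "nat (q mod int n) = nat (q' mod int n)" using inj natlt unfolding cir_def
      by (meson inj_on_eq_iff lessThan_iff)
    then show "q mod int n = q' mod int n" using n0 by (simp add: nat_eq_iff2)
  qed (simp add: cir_def)
  have cir_surj: "\<exists>q. cir q = i" if il: "i < n" for i
  proof -
    have "i \<in> \<sigma> ` {..<n}" using il img by simp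
    then obtain a where a: "a < n" "\<sigma> a = i" by auto
    then show ?thesis unfolding cir_def by (intro exI[of _ "int a"]) simp
  qed
  have adj_cir: "adj n c r (cir q) j \<longleftrightarrow> (j = cir (q+1) \<or> j = cir (q-1))" for q j
  proof
    assume ad: "adj n c r (cir q) j"
    then have "j < n" unfolding adj_def by simp
    then have "j \<in> \<sigma> ` {..<n}" using img by simp
    then obtain b where b: "b < n" "j = \<sigma> b" by auto
    have "b = Suc (nat (q mod int n)) mod n \<or> nat (q mod int n) = Suc b mod n"
      using ch[OF natlt[of q] b(1)] ad b unfolding cir_def by simp
    then show "j = cir (q+1) \<or> j = cir (q-1)"
    proof
      assume "b = Suc (nat (q mod int n)) mod n"
      then have "b = nat ((q + 1) mod int n)" using mod_suc_int[OF n0] by simp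
      then show ?thesis using b unfolding cir_def by simp
    next
      assume "nat (q mod int n) = Suc b mod n"
      then have "b = nat ((q - 1) mod int n)" using mod_pred_int[OF n0 b(1)] by simp
      then show ?thesis using b unfolding cir_def by simp
    qed
  next
    assume "j = cir (q+1) \<or> j = cir (q-1)"
    then show "adj n c r (cir q) j"
    proof
      assume j: "j = cir (q+1)"
      have "nat ((q + 1) mod int n) = Suc (nat (q mod int n)) mod n" by (rule mod_suc_int[OF n0])
      then show ?thesis using ch[OF natlt[of q] natlt[of "q+1"]] j unfolding cir_def by simp
    next
      assume j: "j = cir (q-1)"
      have "nat (q mod int n) = Suc (nat ((q - 1) mod int n)) mod n"
        using mod_pred_int[OF n0 natlt[of "q-1"]] by simp
      then show ?thesis using ch[OF natlt[of q] natlt[of "q-1"]] j unfolding cir_def by simp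
    qed
  qed
  show ?thesis by (rule that[of cir]) (use cir_lt cir_eq cir_surj adj_cir in auto)
qed

lemma cycle_oriented:
  assumes disj: "disjoint_circles n c" and cyc: "is_cycle_graph n c r"
    and sync: "sync_schedule n c r f g"
  shows "\<exists>cir y. oriented_cycle n c r f g cir y"
proof -
  have n3: "n \<ge> 3" using cyc unfolding is_cycle_graph_def by simp
  obtain cir where cir_lt: "\<And>q. cir q < n"
    and cir_eq: "\<And>q q'. cir q = cir q' \<longleftrightarrow> q mod int n = q' mod int n"
    and cir_surj: "\<And>i. i < n \<Longrightarrow> \<exists>q. cir q = i"
    and adj_cir: "\<And>q j. adj n c r (cir q) j \<longleftrightarrow> (j = cir (q+1) \<or> j = cir (q-1))"
    using cycle_labelling[OF cyc] by blast
  have adj_next: "adj n c r (cir q) (cir (q+1))" for q using adj_cir by blast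
  have ne_mod: "(q + d) mod int n \<noteq> q mod int n" if "0 < d" "d < int n" for q d :: int
  proof
    assume "(q + d) mod int n = q mod int n"
    then have "int n dvd d" by (metis add_diff_cancel_left' mod_eq_dvd_iff)
    then have "int n \<le> d" using that(1) by (rule zdvd_imp_le)
    then show False using that(2) by simp
  qed
  have cne: "cir (q + 1) \<noteq> cir q" for q using cir_eq ne_mod[of 1 q] n3 by auto
  have cne2: "cir (q + 2) \<noteq> cir q" for q using cir_eq ne_mod[of 2 q] n3 by auto
  have gpm: "g i = 1 \<or> g i = -1" if "i < n" for i using sync that unfolding sync_schedule_def by blast
  have cdist: "c (cir (q+1)) \<noteq> c (cir q)" for q
  proof
    assume "c (cir (q+1)) = c (cir q)"
    moreover have "2 < dist (c (cir (q+1))) (c (cir q))"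
      using disj cir_lt[of "q+1"] cir_lt[of q] cne[of q] unfolding disjoint_circles_def by blast
    ultimately show False by simp
  qed
  have "\<exists>x. \<forall>\<tau>. at_link c f g (cir q) (cir (q+1)) \<tau> \<longleftrightarrow> (\<exists>k::int. \<tau> = x + k)" for q
    using at_link_iff_int_shift[where g=g and i="cir q" and c=c and j="cir (q+1)" and f=f, OF gpm[OF cir_lt[of q]] cdist[of q]] .
  then obtain x where xspec: "\<And>q \<tau>. at_link c f g (cir q) (cir (q+1)) \<tau> \<longleftrightarrow> (\<exists>k::int. \<tau> = x q + k)"
    by metis
  have xspec': "at_link c f g (cir (q+1)) (cir q) \<tau> \<longleftrightarrow> (\<exists>k::int. \<tau> = x q + k)" for q \<tau>
    using xspec at_link_sym[OF sync adj_next] by blast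
  have sep: "False" if "\<exists>k::int. a = x q + real_of_int k" "\<exists>k::int. a = x (q+1) + real_of_int k" for q a
  proof -
    have l1: "at_link c f g (cir (q+1)) (cir q) a" using xspec' that(1) by blast
    have l2: "at_link c f g (cir (q+1)) (cir (q+1+1)) a" using xspec that(2) by blast
    have a1: "adj n c r (cir (q+1)) (cir q)" using adj_cir by auto
    have a2: "adj n c r (cir (q+1)) (cir (q+1+1))" using adj_cir by auto
    have "cir q \<noteq> cir (q+1+1)" using cne2[of q] by (simp add: add.assoc)
    then show False using no_simultaneous_links[OF sync disj a1 a2 _ l1 l2] by blast
  qed
  define y where "y = rep_seq x"
  have ycl: "\<exists>k::int. y q = x q + k" for q unfolding y_def by (rule rep_seq_class)
  have yst: "y q < y (q + 1) \<and> y (q + 1) < y q + 1" for q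
    unfolding y_def by (rule rep_seq_step) (use sep in blast)
  have fwd: "at_link c f g (cir q) (cir (q+1)) \<tau> \<longleftrightarrow> (\<exists>k::int. \<tau> = y q + k)" for q \<tau>
  proof -
    obtain k0 :: int where "y q = x q + k0" using ycl by blast
    then have "(\<exists>k::int. \<tau> = x q + k) \<longleftrightarrow> (\<exists>k::int. \<tau> = y q + k)" by (rule ex_int_shift_iff)
    then show ?thesis using xspec by blast
  qed
  have bwd: "at_link c f g (cir (q+1)) (cir q) \<tau> \<longleftrightarrow> (\<exists>k::int. \<tau> = y q + k)" for q \<tau>
    using fwd at_link_sym[OF sync adj_next] by blast
  have "oriented_cycle n c r f g cir y"
    by (unfold_locales) (use cir_lt cir_eq cir_surj adj_cir fwd bwd yst n3 in auto)
  then show ?thesis by blast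
qed

context oriented_cycle begin

lemma follows_ring:
  assumes sync: "sync_schedule n c r f g" and disj: "disjoint_circles n c"
    and run: "run n c r f g s0 P0 pos" and u: "u < n"
    and nn: "\<And>\<tau>. \<tau> \<ge> s0 \<Longrightarrow> pos u \<tau> \<noteq> None"
    and st: "pos u s0 = Some (cir (ring_idx (s0 - real_of_int m)))"
    and free: "\<And>\<tau> i j. \<tau> > s0 \<Longrightarrow> left_state pos u \<tau> = Some i \<Longrightarrow> adj n c r i j \<Longrightarrow>
                  at_link c f g i j \<tau> \<Longrightarrow> \<not> occupied n (\<lambda>k. left_state pos k \<tau>) j"
    and t: "\<tau> \<ge> s0"
  shows "pos u \<tau> = Some (cir (ring_idx (\<tau> - real_of_int m)))"
proof (rule real_time_induct[of "\<lambda>\<tau>. pos u \<tau> = Some (cir (ring_idx (\<tau> - real_of_int m)))" s0 \<tau>])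
  show "pos u s0 = Some (cir (ring_idx (s0 - real_of_int m)))" by (rule st)
next
  fix \<tau> :: real assume t: "\<tau> > s0"
    and IH: "\<And>s. s0 \<le> s \<Longrightarrow> s < \<tau> \<Longrightarrow> pos u s = Some (cir (ring_idx (s - real_of_int m)))"
  have ev: "eventually (\<lambda>s. (s0 < s \<and> s < \<tau> \<and> (\<forall>k<n. pos k s = left_state pos k \<tau>))
        \<and> ring_idx (s - real_of_int m) = left_ring_idx (\<tau> - real_of_int m)) (at_left \<tau>)"
    using run_left[OF run t] ring_idx_at_left by (rule eventually_conj)
  obtain s where s: "s0 < s" "s < \<tau>" "\<forall>k<n. pos k s = left_state pos k \<tau>"
     "ring_idx (s - real_of_int m) = left_ring_idx (\<tau> - real_of_int m)"
    using eventually_at_left_ex[OF ev] by blast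
  have ls: "left_state pos u \<tau> = Some (cir (left_ring_idx (\<tau> - real_of_int m)))"
    using IH[of s] s u by auto
  obtain M where M: "step_ok n c r f g (\<lambda>k. left_state pos k \<tau>) \<tau> M"
    "\<forall>k<n. pos k \<tau> = M k \<or> pos k \<tau> = None" using run_step[OF run t] by blast
  have pM: "pos u \<tau> = M u" using M(2) nn[of \<tau>] t u by auto
  define q where "q = ring_idx (\<tau> - real_of_int m)"
  have sp: "y (q - 1) \<le> \<tau> - m" "\<tau> - m < y q" using ring_idx_spec q_def by auto
  show "pos u \<tau> = Some (cir (ring_idx (\<tau> - real_of_int m)))"
  proof (cases "\<tau> - real_of_int m = y (q - 1)")
    case True
    then have ql: "left_ring_idx (\<tau> - real_of_int m) = q - 1" unfolding left_ring_idx_def q_def by simp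
    note link = link_at_ring_idx_jump[OF True]
    have "\<not> occupied n (\<lambda>k. left_state pos k \<tau>) (cir q)"
      using free[OF t _ link] ls ql by simp
    then have "M u = Some (cir q)" using step_moves_to[OF sync disj M(1) u _ link] ls ql by simp
    then show ?thesis using pM q_def by simp
  next
    case False
    then have ql: "left_ring_idx (\<tau> - real_of_int m) = q" unfolding left_ring_idx_def q_def by simp
    have in1: "y (q - 1) + real_of_int m < \<tau>" "\<tau> < y q + real_of_int m" using sp False by auto
    have "M u = Some (cir q)"
      by (rule step_stay[OF M(1) u]) (use ls ql no_link_between_link_times[OF in1] in auto)
    then show ?thesis using pM q_def by simp
  qed
next
  fix \<tau> :: real assume t: "\<tau> \<ge> s0" and P: "pos u \<tau> = Some (cir (ring_idx (\<tau> - real_of_int m)))"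
  show "eventually (\<lambda>\<tau>. pos u \<tau> = Some (cir (ring_idx (\<tau> - real_of_int m)))) (at_right \<tau>)"
    using eventually_conj[OF run_right[OF run t] ring_idx_at_right[of m \<tau>]]
    by (rule eventually_mono) (use P u in auto)
qed (rule t)

definition ring_points :: "complex set" where
  "ring_points = {sched_pt c f g i \<tau> | i \<tau>. i < n \<and> on_ring i \<tau>}"

definition ring_set :: "complex set" where
  "ring_set = closure ring_points"

definition ring_arcs :: "complex set" where
  "ring_arcs = (\<Union>q\<in>{0..<int n}. (\<lambda>\<tau>. sched_pt c f g (cir q) \<tau>) ` {y (q - 1)..y q})"

lemma ring_arcs_closed: "closed ring_arcs"
proof -
  have "compact ring_arcs" unfolding ring_arcs_def
  proof (rule compact_UN)
    show "finite {0..<int n}" by simp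
    fix q assume "q \<in> {0..<int n}"
    show "compact ((\<lambda>\<tau>. sched_pt c f g (cir q) \<tau>) ` {y (q - 1)..y q})"
      by (rule compact_continuous_image) (auto simp: sched_pt_def sched_ang_def intro!: continuous_intros)
  qed
  then show ?thesis by (rule compact_imp_closed)
qed

lemma ring_points_subset_arcs:
  assumes gpm: "\<And>i. i < n \<Longrightarrow> g i = 1 \<or> g i = -1"
  shows "ring_points \<subseteq> ring_arcs"
proof
  fix z assume "z \<in> ring_points"
  then obtain i \<tau> where z: "z = sched_pt c f g i \<tau>" "i < n" "on_ring i \<tau>" unfolding ring_points_def by blast
  obtain q0 where q0: "cir q0 = i" using cir_surj z(2) by blast
  define q where "q = q0 mod int n"
  have "cir q = cir q0" unfolding q_def by (subst cir_eq) simp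
  then have cq: "cir q = i" using q0 by simp
  have qr: "q \<in> {0..<int n}" unfolding q_def using n_ge by simp
  obtain k :: int where k: "y (q - 1) + k \<le> \<tau>" "\<tau> < y q + k" using on_ring_at[OF cq] z(3) by blast
  have "z = sched_pt c f g (cir q) (\<tau> + real_of_int (- k))"
    using z(1) sched_periodic[where c=c and f=f and g=g and i=i and \<tau>=\<tau> and j="-k"] gpm[OF z(2)] cq by simp
  moreover have "\<tau> + real_of_int (- k) \<in> {y (q - 1)..y q}" using k by simp
  ultimately show "z \<in> ring_arcs" unfolding ring_arcs_def using qr by blast
qed

lemma ring_set_mem_iff:
  assumes disj: "disjoint_circles n c" and gpm: "\<And>i. i < n \<Longrightarrow> g i = 1 \<or> g i = -1"
    and i: "i < n" and nolink: "\<And>j. adj n c r i j \<Longrightarrow> \<not> at_link c f g i j t"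
  shows "sched_pt c f g i t \<in> ring_set \<longleftrightarrow> on_ring i t"
proof
  assume "on_ring i t"
  then have "sched_pt c f g i t \<in> ring_points" unfolding ring_points_def using i by blast
  then show "sched_pt c f g i t \<in> ring_set" unfolding ring_set_def using closure_subset by blast
next
  assume "sched_pt c f g i t \<in> ring_set"
  moreover have "ring_set \<subseteq> ring_arcs" unfolding ring_set_def
    by (rule closure_minimal[OF ring_points_subset_arcs[OF gpm] ring_arcs_closed])
  ultimately have "sched_pt c f g i t \<in> ring_arcs" by blast
  then obtain q \<tau> where q: "q \<in> {0..<int n}" "\<tau> \<in> {y (q - 1)..y q}"
    "sched_pt c f g i t = sched_pt c f g (cir q) \<tau>" unfolding ring_arcs_def by blast
  have ci: "cir q = i" using sched_disjoint[OF disj i cir_lt q(3)] by simp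
  have "sched_pt c f g i t = sched_pt c f g i \<tau>" using q(3) ci by simp
  then obtain j :: int where j: "t = \<tau> + j"
    using sched_time[where c=c and f=f and g=g and i=i and t=t and \<tau>=\<tau>] gpm[OF i] by blast
  have n1: "\<tau> \<noteq> y q"
  proof
    assume "\<tau> = y q"
    then have "at_link c f g (cir q) (cir (q + 1)) t" using link_fwd j by blast
    moreover have "adj n c r (cir q) (cir (q + 1))" using adj_cir by blast
    ultimately show False using nolink ci by blast
  qed
  have n2: "\<tau> \<noteq> y (q - 1)"
  proof
    assume "\<tau> = y (q - 1)"
    then have "at_link c f g (cir (q - 1 + 1)) (cir (q - 1)) t" using link_bwd j by blast
    then have "at_link c f g (cir q) (cir (q - 1)) t" by simp
    moreover have "adj n c r (cir q) (cir (q - 1))" using adj_cir by blast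
    ultimately show False using nolink ci by blast
  qed
  show "on_ring i t" unfolding on_ring_def using q(2) n1 n2 j ci
    by (intro exI[of _ q] exI[of _ j]) auto
qed

lemma ring_eq_ring_set:
  assumes sync: "sync_schedule n c r f g" and disj: "disjoint_circles n c" and i: "i < n"
    and run: "run n c r f g s (\<lambda>k. if k = i then Some i else None) pos"
    and nn: "\<And>\<tau>. \<tau> \<ge> s \<Longrightarrow> pos i \<tau> \<noteq> None" and lab: "on_ring i s"
  shows "closure {sched_pt c f g (the (pos i \<tau>)) \<tau> | \<tau>. \<tau> \<ge> s} = ring_set"
proof -
  have gpm: "\<And>i. i < n \<Longrightarrow> g i = 1 \<or> g i = -1" using sync unfolding sync_schedule_def by blast
  obtain q and m :: int where qm: "cir q = i" "y (q - 1) + m \<le> s" "s < y q + m"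
    using lab unfolding on_ring_def by blast
  have Qs: "ring_idx (s - real_of_int m) = q" using qm by (intro ring_idx_eq) auto
  have st: "pos i s = Some (cir (ring_idx (s - real_of_int m)))"
    using run_start[OF run i] nn[of s] Qs qm by auto
  have free: "\<not> occupied n (\<lambda>k. left_state pos k \<tau>) j"
    if t: "\<tau> > s" and ls: "left_state pos i \<tau> = Some i'" and ad: "adj n c r i' j" for \<tau> i' j
  proof
    assume "occupied n (\<lambda>k. left_state pos k \<tau>) j"
    then obtain k where k: "k < n" "left_state pos k \<tau> = Some j" unfolding occupied_def by blast
    show False
    proof (cases "k = i")
      case True then show False using k ls ad unfolding adj_def by simp
    next
      case False then show False using absent_left_state[OF run k(1) _ t] k by simp
    qed
  qed
  have pth: "pos i \<tau> = Some (cir (ring_idx (\<tau> - real_of_int m)))" if "\<tau> \<ge> s" for \<tau>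
    by (rule follows_ring[OF sync disj run i nn st]) (use free that in auto)
  define T where "T = {sched_pt c f g (the (pos i \<tau>)) \<tau> | \<tau>. \<tau> \<ge> s}"
  have T: "T = {sched_pt c f g (cir (ring_idx (\<tau> - real_of_int m))) \<tau> | \<tau>. \<tau> \<ge> s}"
    unfolding T_def using pth by force
  have TS: "T \<subseteq> ring_points" unfolding T ring_points_def using on_ring_ring_idx cir_lt by blast
  have ST: "ring_points \<subseteq> T"
  proof
    fix z assume "z \<in> ring_points"
    then obtain i' \<tau> where z: "z = sched_pt c f g i' \<tau>" "i' < n" "on_ring i' \<tau>" unfolding ring_points_def by blast
    then obtain q' and k' :: int where qk: "cir q' = i'" "y (q' - 1) + k' \<le> \<tau>" "\<tau> < y q' + k'"
      unfolding on_ring_def by blast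
    obtain J :: nat where J: "y ((q' - 1) + int n * int J) \<ge> s - m" using y_unbounded by blast
    define q'' where "q'' = q' + int n * int J"
    have cq: "cir q'' = i'" unfolding q''_def using cir_shift qk(1) by simp
    obtain d :: int where d: "y q'' = y q' + d" "y (q'' - 1) = y (q' - 1) + d"
      using y_class2[of q' q''] cq qk(1) by auto
    have e: "q'' - 1 = (q' - 1) + int n * int J" unfolding q''_def by simp
    define \<tau>' where "\<tau>' = \<tau> + real_of_int (d + m - k')"
    have ring_idx': "ring_idx (\<tau>' - real_of_int m) = q''" unfolding \<tau>'_def using qk d by (intro ring_idx_eq) auto
    have "\<tau>' \<ge> s" using J d(2) qk unfolding \<tau>'_def e[symmetric] by simp
    moreover have "sched_pt c f g i' \<tau>' = sched_pt c f g i' \<tau>"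
      unfolding \<tau>'_def by (rule sched_periodic) (rule gpm[OF z(2)])
    then have "z = sched_pt c f g (cir (ring_idx (\<tau>' - real_of_int m))) \<tau>'"
      using ring_idx' cq z(1) by simp
    ultimately show "z \<in> T" unfolding T by blast
  qed
  have "closure T = ring_set" unfolding ring_set_def
    using closure_mono[OF TS] closure_mono[OF ST] by blast
  then show ?thesis unfolding T_def .
qed

lemma starving_follows_ring:
  assumes sync: "sync_schedule n c r f g" and disj: "disjoint_circles n c"
    and ps: "partial_scs n c r f g pos" and k: "k < n" and sv: "starves n c r f g pos k"
    and lab: "on_ring k 0"
  shows "\<exists>m::int. \<forall>\<tau>\<ge>0. pos k \<tau> = Some (cir (ring_idx (\<tau> - real_of_int m)))"
proof -
  have run: "run n c r f g 0 (\<lambda>k. Some k) pos" using ps unfolding partial_scs_def .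
  obtain q and m :: int where qm: "cir q = k" "y (q - 1) + m \<le> 0" "0 < y q + m"
    using lab unfolding on_ring_def by blast
  have Qs: "ring_idx (0 - real_of_int m) = q" using qm by (intro ring_idx_eq) auto
  have nn: "\<And>\<tau>. \<tau> \<ge> 0 \<Longrightarrow> pos k \<tau> \<noteq> None" using sv unfolding starves_def by blast
  have st: "pos k 0 = Some (cir (ring_idx (0 - real_of_int m)))"
    using run_start[OF run k] nn[of 0] Qs qm by auto
  have free: "\<And>\<tau> i j. \<tau> > 0 \<Longrightarrow> left_state pos k \<tau> = Some i \<Longrightarrow> adj n c r i j \<Longrightarrow>
                  at_link c f g i j \<tau> \<Longrightarrow> \<not> occupied n (\<lambda>k. left_state pos k \<tau>) j"
    using sv unfolding starves_def by blast
  show ?thesis by (intro exI[of _ m] allI impI) (rule follows_ring[OF sync disj run k nn st free])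
qed

text \<open>The gap D = d - ring_idx (\<tau> - m1) - R.ring_idx (\<tau> - m2) counts how many positions v is
  ahead of u along the forward ring (up to a multiple of n). It never becomes 0 because
  configurations are injective, and it cannot jump from 1 to -1: u would then hop onto the circle
  that v is just leaving, which u, being starving, never finds occupied.\<close>

lemma forward_gap_step:
  fixes m1 m2 d :: int
  assumes sync: "sync_schedule n c r f g" and disj: "disjoint_circles n c"
    and ps: "partial_scs n c r f g pos" and u: "u < n" and v: "v < n" and uv: "u \<noteq> v"
    and su: "starves n c r f g pos u"
    and pu: "\<And>\<tau>. \<tau> \<ge> 0 \<Longrightarrow> pos u \<tau> = Some (cir (ring_idx (\<tau> - real_of_int m1)))"
    and pv: "\<And>\<tau>. \<tau> \<ge> 0 \<Longrightarrow> pos v \<tau> = Some (cir (- oriented_cycle.ring_idx rev_y (\<tau> - real_of_int m2)))"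
    and d: "int n dvd d"
    and before: "\<And>s. 0 \<le> s \<Longrightarrow> s < \<tau> \<Longrightarrow>
      ring_idx (s - real_of_int m1) + oriented_cycle.ring_idx rev_y (s - real_of_int m2) < d"
    and t: "\<tau> > 0"
  shows "ring_idx (\<tau> - real_of_int m1) + oriented_cycle.ring_idx rev_y (\<tau> - real_of_int m2) < d"
proof -
  interpret R: oriented_cycle n c r f g rev_cir rev_y by (rule reversed_orientation)
  have run: "run n c r f g 0 (\<lambda>k. Some k) pos" using ps unfolding partial_scs_def .
  define U where "U \<tau> = ring_idx (\<tau> - real_of_int m1)" for \<tau>
  define V where "V \<tau> = - R.ring_idx (\<tau> - real_of_int m2)" for \<tau>
  define D where "D \<tau> = V \<tau> + d - U \<tau>" for \<tau>
  have inj: "injective_config n (\<lambda>k. pos k \<tau>)"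
    using run_injective_config[OF sync disj run injective_config_init] t by simp
  have pu': "pos u \<tau> = Some (cir (U \<tau>))" if "\<tau> \<ge> 0" for \<tau> using pu[OF that] U_def by simp
  have pv': "pos v \<tau> = Some (cir (V \<tau>))" if "\<tau> \<ge> 0" for \<tau> using pv[OF that] V_def by simp
  obtain J where "d = int n * J" using d by (auto simp: dvd_def)
  then have cirS: "cir (x + d) = cir x" for x by (simp add: cir_shift)
  have IH: "D s \<ge> 1" if "0 \<le> s" "s < \<tau>" for s using before[OF that] unfolding D_def U_def V_def by simp
  have ev: "eventually (\<lambda>s. ((0 < s \<and> s < \<tau> \<and> (\<forall>k<n. pos k s = left_state pos k \<tau>))
       \<and> ring_idx (s - real_of_int m1) = left_ring_idx (\<tau> - real_of_int m1))
       \<and> R.ring_idx (s - real_of_int m2) = R.left_ring_idx (\<tau> - real_of_int m2)) (at_left \<tau>)"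
    by (intro eventually_conj run_left[OF run t] ring_idx_at_left R.ring_idx_at_left)
  obtain s where s: "0 < s" "s < \<tau>" "\<forall>k<n. pos k s = left_state pos k \<tau>"
    "ring_idx (s - real_of_int m1) = left_ring_idx (\<tau> - real_of_int m1)"
    "R.ring_idx (s - real_of_int m2) = R.left_ring_idx (\<tau> - real_of_int m2)"
    using eventually_at_left_ex[OF ev] by blast
  define UL where "UL = left_ring_idx (\<tau> - real_of_int m1)"
  define VL where "VL = - R.left_ring_idx (\<tau> - real_of_int m2)"
  have Ds: "VL + d - UL \<ge> 1" using IH[of s] s unfolding D_def U_def V_def UL_def VL_def by simp
  have Ucase: "U \<tau> = UL \<or> (U \<tau> = UL + 1 \<and> \<tau> - real_of_int m1 = y (U \<tau> - 1))"
    unfolding U_def UL_def using ring_idx_cases by blast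
  have Vcase: "V \<tau> = VL \<or> V \<tau> = VL - 1"
    unfolding V_def VL_def using R.ring_idx_cases[of "\<tau> - real_of_int m2"] by auto
  have "D \<tau> \<ge> 1"
  proof (rule ccontr)
    assume "\<not> D \<tau> \<ge> 1"
    then have Dlt: "D \<tau> \<le> 0" by simp
    have "D \<tau> = 0 \<or> D \<tau> = -1" using Ucase Vcase Ds Dlt unfolding D_def by auto
    then show False
    proof
      assume "D \<tau> = 0"
      then have "U \<tau> = V \<tau> + d" unfolding D_def by simp
      then have "cir (U \<tau>) = cir (V \<tau>)" using cirS by simp
      then have "pos u \<tau> = pos v \<tau>" using pu' pv' t by simp
      moreover have "pos u \<tau> \<noteq> None" using pu'[of \<tau>] t by simp
      moreover have "injective_config n (\<lambda>k. pos k \<tau>)" by (rule inj)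
      ultimately show False using u v uv unfolding injective_config_def by blast
    next
      assume Dm: "D \<tau> = -1"
      then have hop: "U \<tau> = UL + 1" "\<tau> - real_of_int m1 = y (U \<tau> - 1)" and vl: "VL + d - UL = 1"
        using Ucase Vcase Ds unfolding D_def by auto
      define q where "q = U \<tau>"
      note link = link_at_ring_idx_jump[of \<tau> m1 q, unfolded q_def, OF hop(2), folded q_def]
      have lu: "left_state pos u \<tau> = Some (cir (q - 1))"
        using s(3) u pu'[of s] s(1) s(4) hop(1) q_def unfolding U_def UL_def by simp
      have "left_state pos v \<tau> = Some (cir VL)"
        using s(3) v pv'[of s] s(1) s(5) unfolding V_def VL_def by simp
      moreover have "cir VL = cir q"
      proof -
        have "VL + d = q" using vl hop(1) q_def by simp
        then show ?thesis using cirS[of VL] by simp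
      qed
      ultimately have "occupied n (\<lambda>k. left_state pos k \<tau>) (cir q)"
        unfolding occupied_def using v by auto
      moreover have "\<not> occupied n (\<lambda>k. left_state pos k \<tau>) (cir q)"
        using su t lu link unfolding starves_def by blast
      ultimately show False by blast
    qed
  qed
  then show ?thesis unfolding D_def U_def V_def by simp
qed

lemma forward_gap_invariant:
  fixes m1 m2 d :: int
  assumes sync: "sync_schedule n c r f g" and disj: "disjoint_circles n c"
    and ps: "partial_scs n c r f g pos" and u: "u < n" and v: "v < n" and uv: "u \<noteq> v"
    and su: "starves n c r f g pos u"
    and pu: "\<And>\<tau>. \<tau> \<ge> 0 \<Longrightarrow> pos u \<tau> = Some (cir (ring_idx (\<tau> - real_of_int m1)))"
    and pv: "\<And>\<tau>. \<tau> \<ge> 0 \<Longrightarrow> pos v \<tau> = Some (cir (- oriented_cycle.ring_idx rev_y (\<tau> - real_of_int m2)))"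
    and d: "int n dvd d"
    and start: "ring_idx (- real_of_int m1) + oriented_cycle.ring_idx rev_y (- real_of_int m2) < d"
    and t: "\<tau> \<ge> 0"
  shows "ring_idx (\<tau> - real_of_int m1) + oriented_cycle.ring_idx rev_y (\<tau> - real_of_int m2) < d"
proof -
  interpret R: oriented_cycle n c r f g rev_cir rev_y by (rule reversed_orientation)
  have run: "run n c r f g 0 (\<lambda>k. Some k) pos" using ps unfolding partial_scs_def .
  define U where "U \<tau> = ring_idx (\<tau> - real_of_int m1)" for \<tau>
  define V where "V \<tau> = - R.ring_idx (\<tau> - real_of_int m2)" for \<tau>
  define D where "D \<tau> = V \<tau> + d - U \<tau>" for \<tau>
  have "D \<tau> \<ge> 1"
  proof (rule real_time_induct[of "\<lambda>\<tau>. D \<tau> \<ge> 1" 0 \<tau>])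
    show "D 0 \<ge> 1" using start unfolding D_def U_def V_def by simp
  next
    fix \<tau> :: real assume "\<tau> \<ge> 0" and P: "D \<tau> \<ge> 1"
    have "eventually (\<lambda>s. ring_idx (s - real_of_int m1) = ring_idx (\<tau> - real_of_int m1) \<and>
        R.ring_idx (s - real_of_int m2) = R.ring_idx (\<tau> - real_of_int m2)) (at_right \<tau>)"
      using ring_idx_at_right R.ring_idx_at_right by (rule eventually_conj)
    then show "eventually (\<lambda>\<tau>. D \<tau> \<ge> 1) (at_right \<tau>)"
      by (rule eventually_mono) (use P in \<open>auto simp: D_def U_def V_def\<close>)
  next
    fix \<tau> :: real assume "\<tau> > 0" and IH: "\<And>s. 0 \<le> s \<Longrightarrow> s < \<tau> \<Longrightarrow> D s \<ge> 1"
    have before: "ring_idx (s - real_of_int m1) + R.ring_idx (s - real_of_int m2) < d"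
      if "0 \<le> s" "s < \<tau>" for s
      using IH[OF that] unfolding D_def U_def V_def by simp
    have "ring_idx (\<tau> - real_of_int m1) + R.ring_idx (\<tau> - real_of_int m2) < d"
      using forward_gap_step[OF sync disj ps u v uv su pu pv d before \<open>\<tau> > 0\<close>] .
    then show "D \<tau> \<ge> 1" unfolding D_def U_def V_def by simp
  qed (rule t)
  then show ?thesis unfolding D_def U_def V_def by simp
qed

lemma no_starver_against_reverse_walker:
  fixes m1 m2 :: int
  assumes sync: "sync_schedule n c r f g" and disj: "disjoint_circles n c"
    and ps: "partial_scs n c r f g pos" and u: "u < n" and v: "v < n" and uv: "u \<noteq> v"
    and su: "starves n c r f g pos u"
    and pu: "\<And>\<tau>. \<tau> \<ge> 0 \<Longrightarrow> pos u \<tau> = Some (cir (ring_idx (\<tau> - real_of_int m1)))"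
    and pv: "\<And>\<tau>. \<tau> \<ge> 0 \<Longrightarrow> pos v \<tau> = Some (cir (- oriented_cycle.ring_idx rev_y (\<tau> - real_of_int m2)))"
  shows False
proof -
  interpret R: oriented_cycle n c r f g rev_cir rev_y by (rule reversed_orientation)
  have run: "run n c r f g 0 (\<lambda>k. Some k) pos" using ps unfolding partial_scs_def .
  define U0 where "U0 = ring_idx (- real_of_int m1)"
  define V0 where "V0 = - R.ring_idx (- real_of_int m2)"
  have "cir U0 = u" using run_start[OF run u] pu[of 0] U0_def by auto
  moreover have "cir V0 = v" using run_start[OF run v] pv[of 0] V0_def by auto
  ultimately have "(V0 - U0) mod int n \<noteq> 0"
  proof (intro notI)
    assume "(V0 - U0) mod int n = 0"
    then have "V0 mod int n = U0 mod int n" by (simp add: mod_eq_dvd_iff dvd_eq_mod_eq_0)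
    then have "cir V0 = cir U0" using cir_eq by blast
    then show False if "cir U0 = u" "cir V0 = v" using that uv by simp
  qed
  moreover have "(V0 - U0) mod int n \<ge> 0" using n_ge by simp
  ultimately have pos_gap: "(V0 - U0) mod int n \<ge> 1" by simp
  define d where "d = U0 + (V0 - U0) mod int n - V0"
  have "int n dvd ((V0 - U0) mod int n - (V0 - U0))" by (simp add: mod_eq_dvd_iff[symmetric])
  then have dvd: "int n dvd d" unfolding d_def by (simp add: algebra_simps)
  have start: "ring_idx (- real_of_int m1) + R.ring_idx (- real_of_int m2) < d"
    using pos_gap unfolding d_def U0_def V0_def by simp
  have gap: "ring_idx (\<tau> - real_of_int m1) + R.ring_idx (\<tau> - real_of_int m2) < d"
    if "\<tau> \<ge> 0" for \<tau>
    using forward_gap_invariant[OF sync disj ps u v uv su pu pv dvd start that] .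
  define \<tau>0 where "\<tau>0 = max 0 (max (y d + m1) (y (- 1) + 1 + m2))"
  have "d + 1 \<le> ring_idx (\<tau>0 - real_of_int m1)" by (rule ring_idx_ge) (simp add: \<tau>0_def)
  moreover have "0 + 1 \<le> R.ring_idx (\<tau>0 - real_of_int m2)" by (rule R.ring_idx_ge) (simp add: \<tau>0_def)
  moreover have "ring_idx (\<tau>0 - real_of_int m1) + R.ring_idx (\<tau>0 - real_of_int m2) < d"
    by (rule gap) (simp add: \<tau>0_def)
  ultimately show False by linarith
qed

lemma starving_stays_on_ring:
  assumes sync: "sync_schedule n c r f g" and disj: "disjoint_circles n c"
    and ps: "partial_scs n c r f g pos" and k: "k < n" and sv: "starves n c r f g pos k"
    and on: "on_ring k 0" and t: "t \<ge> 0"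
  shows "\<exists>i. pos k t = Some i \<and> i < n \<and> on_ring i t"
proof -
  obtain m :: int where "\<forall>\<tau>\<ge>0. pos k \<tau> = Some (cir (ring_idx (\<tau> - real_of_int m)))"
    using starving_follows_ring[OF sync disj ps k sv on] by blast
  then show ?thesis using t on_ring_ring_idx cir_lt by blast
qed

lemma starvers_on_same_ring:
  assumes sync: "sync_schedule n c r f g" and disj: "disjoint_circles n c"
    and ps: "partial_scs n c r f g pos" and u: "u < n" and v: "v < n"
    and su: "starves n c r f g pos u" and sv: "starves n c r f g pos v" and on: "on_ring u 0"
  shows "on_ring v 0"
proof (rule ccontr)
  interpret R: oriented_cycle n c r f g rev_cir rev_y by (rule reversed_orientation)
  assume off: "\<not> on_ring v 0"
  then have "R.on_ring v 0" using on_rev_ring_iff[OF v] on_ring_reversed by simp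
  then obtain m2 :: int where m2: "\<forall>\<tau>\<ge>0. pos v \<tau> = Some (cir (- R.ring_idx (\<tau> - real_of_int m2)))"
    using R.starving_follows_ring[OF sync disj ps v sv] by auto
  obtain m1 :: int where m1: "\<forall>\<tau>\<ge>0. pos u \<tau> = Some (cir (ring_idx (\<tau> - real_of_int m1)))"
    using starving_follows_ring[OF sync disj ps u su on] by blast
  have "u \<noteq> v" using on off by blast
  then show False
    by (rule no_starver_against_reverse_walker[OF sync disj ps u v _ su]) (use m1 m2 in auto)
qed

lemma starving_count_le:
  assumes sync: "sync_schedule n c r f g" and disj: "disjoint_circles n c"
    and ps: "partial_scs n c r f g pos" and t: "t \<ge> 0"
  shows "card {k. k < n \<and> starves n c r f g pos k}
           \<le> max (card {i. i < n \<and> on_ring i t}) (card {i. i < n \<and> on_rev_ring i t})"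
proof -
  interpret R: oriented_cycle n c r f g rev_cir rev_y by (rule reversed_orientation)
  define S where "S = {k. k < n \<and> starves n c r f g pos k}"
  have run: "run n c r f g 0 (\<lambda>k. Some k) pos" using ps unfolding partial_scs_def .
  have inj: "injective_config n (\<lambda>k. pos k t)"
    using run_injective_config[OF sync disj run injective_config_init t] .
  define h where "h k = the (pos k t)" for k
  have "inj_on h S"
  proof
    fix k1 k2 assume k: "k1 \<in> S" "k2 \<in> S" and e: "h k1 = h k2"
    have "pos k1 t \<noteq> None" "pos k2 t \<noteq> None" using k t unfolding S_def starves_def by auto
    then have "pos k1 t = pos k2 t" "pos k1 t \<noteq> None" using e unfolding h_def by auto
    moreover have "k1 < n" "k2 < n" using k unfolding S_def by auto
    ultimately show "k1 = k2" using inj unfolding injective_config_def by blast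
  qed
  then have card_le: "card S \<le> card {i. i < n \<and> P i t}"
    if "\<And>k. k \<in> S \<Longrightarrow> \<exists>i. pos k t = Some i \<and> i < n \<and> P i t" for P :: "nat \<Rightarrow> real \<Rightarrow> bool"
    by (rule card_inj_on_le) (use that in \<open>force simp: h_def\<close>)+
  have same: "on_ring v 0" if "u \<in> S" "v \<in> S" "on_ring u 0" for u v
    using starvers_on_same_ring[OF sync disj ps] that unfolding S_def by blast
  consider "\<forall>k\<in>S. on_ring k 0" | "\<forall>k\<in>S. R.on_ring k 0"
  proof (cases "\<exists>u\<in>S. on_ring u 0")
    case True
    then show ?thesis using same that(1) by blast
  next
    case False
    then have "\<forall>k\<in>S. R.on_ring k 0" using on_rev_ring_iff on_ring_reversed unfolding S_def by auto
    then show ?thesis by (rule that(2))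
  qed
  then show ?thesis
  proof cases
    case 1
    have "\<exists>i. pos k t = Some i \<and> i < n \<and> on_ring i t" if "k \<in> S" for k
      using starving_stays_on_ring[OF sync disj ps _ _ _ t] 1 that unfolding S_def by blast
    then have "card S \<le> card {i. i < n \<and> on_ring i t}" by (rule card_le)
    then show ?thesis unfolding S_def by simp
  next
    case 2
    have "\<exists>i. pos k t = Some i \<and> i < n \<and> R.on_ring i t" if "k \<in> S" for k
      using R.starving_stays_on_ring[OF sync disj ps _ _ _ t] 2 that unfolding S_def by blast
    then have "card S \<le> card {i. i < n \<and> R.on_ring i t}" by (rule card_le)
    then show ?thesis unfolding S_def on_ring_reversed by simp
  qed
qed

definition ring_walk :: "nat set \<Rightarrow> (nat \<Rightarrow> int) \<Rightarrow> nat \<Rightarrow> real \<Rightarrow> nat option" where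
  "ring_walk K m k \<tau> = (if k \<in> K then Some (cir (ring_idx (\<tau> - real_of_int (m k)))) else None)"

lemma ring_walk_at_left:
  "eventually (\<lambda>s. ring_walk K m k s =
     (if k \<in> K then Some (cir (left_ring_idx (\<tau> - real_of_int (m k)))) else None)) (at_left \<tau>)"
  using ring_idx_at_left[of "real_of_int (m k)" \<tau>] by (rule eventually_mono) (simp add: ring_walk_def)

lemma left_state_ring_walk:
  "left_state (ring_walk K m) k \<tau> =
     (if k \<in> K then Some (cir (left_ring_idx (\<tau> - real_of_int (m k)))) else None)"
  using ring_walk_at_left by (rule left_state_eq)

text \<open>Walkers never meet: just before the jump time of walker k onto C_(cir q), any other walker
  is still strictly inside the arc of the forward ring preceding that link.\<close>

lemma ring_walk_target_free:
  assumes k: "k \<in> K" and jump: "\<tau> - real_of_int (m k) = y (q - 1)"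
  shows "\<not> occupied n (\<lambda>k. left_state (ring_walk K m) k \<tau>) (cir q)"
proof
  assume "occupied n (\<lambda>k. left_state (ring_walk K m) k \<tau>) (cir q)"
  then obtain k2 where k2K: "k2 \<in> K"
    and cq: "cir (left_ring_idx (\<tau> - real_of_int (m k2))) = cir q"
    unfolding occupied_def left_state_ring_walk by (auto split: if_splits)
  have a: "y (q - 1) < y q" "y q < y (q - 1) + 1" using y_mono[of "q-1"] y_step[of "q-1"] by auto
  have lt: "\<tau> - (y (q - 1) - y q + 1) < \<tau>" using a by simp
  have "eventually (\<lambda>s. s \<in> {\<tau> - (y (q - 1) - y q + 1)<..<\<tau>} \<and>
           ring_idx (s - real_of_int (m k2)) = left_ring_idx (\<tau> - real_of_int (m k2))) (at_left \<tau>)"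
    by (intro eventually_conj eventually_at_left_real[OF lt] ring_idx_at_left)
  then obtain s where s: "s \<in> {\<tau> - (y (q - 1) - y q + 1)<..<\<tau>}"
    "ring_idx (s - real_of_int (m k2)) = left_ring_idx (\<tau> - real_of_int (m k2))"
    using eventually_at_left_ex by blast
  have "on_ring (cir (ring_idx (s - real_of_int (m k2)))) s" by (rule on_ring_ring_idx)
  then have "on_ring (cir q) s" using s(2) cq by simp
  then obtain j :: int where j: "y (q - 1) + j \<le> s" "s < y q + j" using on_ring_at by blast
  have "real_of_int j < real_of_int (m k)" using j s(1) jump by simp
  then have "j \<le> m k - 1" by simp
  then have "real_of_int j \<le> real_of_int (m k) - 1" by linarith
  then show False using j s(1) jump by simp
qed

lemma ring_walk_step: "step_ok n c r f g (\<lambda>k. left_state (ring_walk K m) k \<tau>) \<tau> (\<lambda>k. ring_walk K m k \<tau>)"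
  unfolding step_ok_def
proof (intro allI impI conjI)
  fix k assume "k < n"
  show "left_state (ring_walk K m) k \<tau> = None \<Longrightarrow> ring_walk K m k \<tau> = None"
    by (simp add: left_state_ring_walk ring_walk_def split: if_splits)
  fix i assume li: "left_state (ring_walk K m) k \<tau> = Some i"
  define x where "x = \<tau> - real_of_int (m k)"
  have kK: "k \<in> K" and i: "i = cir (left_ring_idx x)"
    using li unfolding left_state_ring_walk x_def by (auto split: if_splits)
  have wk: "ring_walk K m k \<tau> = Some (cir (ring_idx x))" using kK x_def by (simp add: ring_walk_def)
  show "if \<exists>j. adj n c r i j \<and> at_link c f g i j \<tau> \<and> \<not> occupied n (\<lambda>k. left_state (ring_walk K m) k \<tau>) j
        then \<exists>j. ring_walk K m k \<tau> = Some j \<and> adj n c r i j \<and> at_link c f g i j \<tau> \<and>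
               \<not> occupied n (\<lambda>k. left_state (ring_walk K m) k \<tau>) j
        else ring_walk K m k \<tau> = Some i"
  proof (cases "ring_idx x = left_ring_idx x")
    case True
    have "\<not> at_link c f g i j \<tau>" if "adj n c r i j" for j
      using no_link_between_link_times[of "ring_idx x" "m k" \<tau> j] ring_idx_between[OF True] that i True x_def
      by simp
    then show ?thesis using wk i True by auto
  next
    case False
    then have hop: "ring_idx x = left_ring_idx x + 1" "x = y (ring_idx x - 1)" using ring_idx_cases[of x] by auto
    then have i': "i = cir (ring_idx x - 1)" using i by simp
    have jump: "\<tau> - real_of_int (m k) = y (ring_idx x - 1)" using hop(2) x_def by simp
    have target: "adj n c r i (cir (ring_idx x))" "at_link c f g i (cir (ring_idx x)) \<tau>"
      "\<not> occupied n (\<lambda>k. left_state (ring_walk K m) k \<tau>) (cir (ring_idx x))"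
      using link_at_ring_idx_jump[OF jump] i' ring_walk_target_free[where m=m, OF kK jump] by simp_all
    then have "\<exists>j. adj n c r i j \<and> at_link c f g i j \<tau> \<and>
        \<not> occupied n (\<lambda>k. left_state (ring_walk K m) k \<tau>) j" by blast
    then show ?thesis using target wk by (simp only: if_True) blast
  qed
qed

lemma ring_walk_run:
  assumes "\<And>k. k \<in> K \<Longrightarrow> cir (ring_idx (- real_of_int (m k))) = k"
  shows "run n c r f g 0 (\<lambda>k. Some k) (ring_walk K m)"
  unfolding run_def
proof (intro conjI allI impI)
  fix k assume "k < n"
  show "ring_walk K m k 0 = Some k \<or> ring_walk K m k 0 = None" using assms by (simp add: ring_walk_def)
next
  fix k :: nat and \<tau> :: real
  show "eventually (\<lambda>s. ring_walk K m k s = ring_walk K m k \<tau>) (at_right \<tau>)"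
    using ring_idx_at_right[of "real_of_int (m k)" \<tau>] by (rule eventually_mono) (simp add: ring_walk_def)
next
  fix k :: nat and \<tau> :: real
  show "\<exists>v. eventually (\<lambda>s. ring_walk K m k s = v) (at_left \<tau>)"
    using ring_walk_at_left by blast
next
  fix \<tau> :: real
  show "\<exists>M. step_ok n c r f g (\<lambda>k. left_state (ring_walk K m) k \<tau>) \<tau> M \<and>
          (\<forall>k<n. ring_walk K m k \<tau> = M k \<or> ring_walk K m k \<tau> = None)"
    using ring_walk_step by blast
qed

lemma ring_walk_starves:
  assumes sync: "sync_schedule n c r f g" and disj: "disjoint_circles n c" and k: "k \<in> K"
  shows "starves n c r f g (ring_walk K m) k"
  unfolding starves_def
proof (intro conjI allI impI)
  fix \<tau> :: real show "ring_walk K m k \<tau> \<noteq> None" using k by (simp add: ring_walk_def)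
next
  fix \<tau> :: real and i j
  assume li: "left_state (ring_walk K m) k \<tau> = Some i" and ad: "adj n c r i j"
    and al: "at_link c f g i j \<tau>"
  define x where "x = \<tau> - real_of_int (m k)"
  have i: "i = cir (left_ring_idx x)" using li k unfolding left_state_ring_walk x_def by simp
  show "\<not> occupied n (\<lambda>k. left_state (ring_walk K m) k \<tau>) j"
  proof (cases "ring_idx x = left_ring_idx x")
    case True
    then show ?thesis
      using no_link_between_link_times[of "ring_idx x" "m k" \<tau> j] ring_idx_between[OF True] ad al i x_def
      by simp
  next
    case False
    then have hop: "ring_idx x = left_ring_idx x + 1" "x = y (ring_idx x - 1)" using ring_idx_cases[of x] by auto
    then have i': "i = cir (ring_idx x - 1)" using i by simp
    have jump: "\<tau> - real_of_int (m k) = y (ring_idx x - 1)" using hop(2) x_def by simp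
    have ad2: "adj n c r i (cir (ring_idx x))" and al2: "at_link c f g i (cir (ring_idx x)) \<tau>"
      using link_at_ring_idx_jump[OF jump] i' by simp_all
    have "j = cir (ring_idx x)"
    proof (rule ccontr)
      assume "j \<noteq> cir (ring_idx x)"
      then show False using no_simultaneous_links[OF sync disj ad2 ad _ al2 al] by blast
    qed
    then show ?thesis using ring_walk_target_free[where m=m, OF k jump] by simp
  qed
qed

lemma starving_count_ge:
  assumes sync: "sync_schedule n c r f g" and disj: "disjoint_circles n c"
  shows "\<exists>pos. partial_scs n c r f g pos \<and>
           card {i. i < n \<and> on_ring i t} \<le> card {k. k < n \<and> starves n c r f g pos k}"
proof -
  define K where "K = {k. k < n \<and> on_ring k 0}"
  have "\<exists>m::int. cir (ring_idx (- real_of_int m)) = k" if kK: "k \<in> K" for k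
  proof -
    obtain q and m :: int where qm: "cir q = k" "y (q - 1) + m \<le> 0" "0 < y q + m"
      using kK unfolding K_def on_ring_def by blast
    have "ring_idx (- real_of_int m) = q" using qm by (intro ring_idx_eq) auto
    then show ?thesis using qm by blast
  qed
  then obtain m where m: "\<And>k. k \<in> K \<Longrightarrow> cir (ring_idx (- real_of_int (m k))) = k" by metis
  define pos where "pos = ring_walk K m"
  have ps: "partial_scs n c r f g pos" unfolding partial_scs_def pos_def by (rule ring_walk_run[OF m])
  have "{i. i < n \<and> on_ring i t} \<subseteq> (\<lambda>k. cir (ring_idx (t - real_of_int (m k)))) ` K"
  proof
    fix i assume "i \<in> {i. i < n \<and> on_ring i t}"
    then obtain q and j :: int where qj: "cir q = i" "y (q - 1) + j \<le> t" "t < y q + j"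
      unfolding on_ring_def by blast
    define k0 where "k0 = cir (ring_idx (- real_of_int j))"
    have "on_ring (cir (ring_idx (0 - real_of_int j))) 0" by (rule on_ring_ring_idx)
    then have k0K: "k0 \<in> K" unfolding K_def k0_def using cir_lt by simp
    have "cir (ring_idx (- real_of_int (m k0))) = cir (ring_idx (- real_of_int j))"
      using m[OF k0K] k0_def by simp
    then have "cir (ring_idx (t - real_of_int (m k0))) = cir (ring_idx (t - real_of_int j))"
      by (rule circ_ring_idx_determined)
    moreover have "ring_idx (t - real_of_int j) = q" using qj by (intro ring_idx_eq) auto
    ultimately show "i \<in> (\<lambda>k. cir (ring_idx (t - real_of_int (m k)))) ` K" using k0K qj(1) by auto
  qed
  moreover have finK: "finite K" unfolding K_def by simp
  ultimately have "card {i. i < n \<and> on_ring i t} \<le> card ((\<lambda>k. cir (ring_idx (t - real_of_int (m k)))) ` K)"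
    by (intro card_mono finite_imageI)
  also have "\<dots> \<le> card K" by (rule card_image_le[OF finK])
  also have "\<dots> \<le> card {k. k < n \<and> starves n c r f g pos k}"
    using ring_walk_starves[OF sync disj] unfolding pos_def K_def by (intro card_mono) auto
  finally show ?thesis using ps by blast
qed

lemma starvation_number_eq_max:
  assumes sync: "sync_schedule n c r f g" and disj: "disjoint_circles n c" and t: "t \<ge> 0"
  shows "starvation_number n c r f g
           = max (card {i. i < n \<and> on_ring i t}) (card {i. i < n \<and> on_rev_ring i t})"
proof -
  interpret R: oriented_cycle n c r f g rev_cir rev_y
    by (rule reversed_orientation)
  define S where "S pos = card {k. k < n \<and> starves n c r f g pos k}" for pos
  define A where "A = {S pos | pos. partial_scs n c r f g pos}"
  have "S pos \<le> card {..<n}" for pos unfolding S_def by (rule card_mono) auto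
  then have "A \<subseteq> {..n}" unfolding A_def by auto
  then have finA: "finite A" by (rule finite_subset) simp
  obtain posF where posF: "partial_scs n c r f g posF" "card {i. i < n \<and> on_ring i t} \<le> S posF"
    using starving_count_ge[OF sync disj] unfolding S_def by blast
  obtain posB where posB: "partial_scs n c r f g posB" "card {i. i < n \<and> on_rev_ring i t} \<le> S posB"
    using R.starving_count_ge[OF sync disj, of t] unfolding S_def on_ring_reversed by blast
  have inA: "S posF \<in> A" "S posB \<in> A" unfolding A_def using posF(1) posB(1) by blast+
  have "Max A \<le> max (card {i. i < n \<and> on_ring i t}) (card {i. i < n \<and> on_rev_ring i t})"
  proof (rule Max.boundedI[OF finA])
    show "A \<noteq> {}" using inA by blast
  next
    fix z assume "z \<in> A"
    then obtain pos where "partial_scs n c r f g pos" "z = S pos" unfolding A_def by blast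
    then show "z \<le> max (card {i. i < n \<and> on_ring i t}) (card {i. i < n \<and> on_rev_ring i t})"
      using starving_count_le[OF sync disj _ t] unfolding S_def by blast
  qed
  moreover have "S posF \<le> Max A" "S posB \<le> Max A" using Max_ge[OF finA] inA by blast+
  ultimately have "Max A = max (card {i. i < n \<and> on_ring i t}) (card {i. i < n \<and> on_rev_ring i t})"
    using posF(2) posB(2) by simp
  then show ?thesis unfolding starvation_number_def A_def S_def .
qed

lemma ring_is_ring_set:
  assumes sync: "sync_schedule n c r f g" and disj: "disjoint_circles n c"
    and "is_ring n c r f g R"
  shows "R = ring_set \<or> R = oriented_cycle.ring_set n c f g rev_cir rev_y"
proof -
  interpret R: oriented_cycle n c r f g rev_cir rev_y
    by (rule reversed_orientation)
  obtain i s pos where i: "i < n" and run: "run n c r f g s (\<lambda>k. if k = i then Some i else None) pos"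
    and alive: "\<forall>\<tau>\<ge>s. pos i \<tau> \<noteq> None"
    and RR: "R = closure {sched_pt c f g (the (pos i \<tau>)) \<tau> | \<tau>. \<tau> \<ge> s}"
    using assms(3) unfolding is_ring_def by blast
  show ?thesis
  proof (cases "on_ring i s")
    case True
    then show ?thesis unfolding RR using ring_eq_ring_set[OF sync disj i run] alive by blast
  next
    case False
    then have "R.on_ring i s" using on_rev_ring_iff[OF i] on_ring_reversed by simp
    then show ?thesis unfolding RR using R.ring_eq_ring_set[OF sync disj i run] alive by blast
  qed
qed

lemma robots_in_ring_set:
  assumes disj: "disjoint_circles n c" and gpm: "\<And>i. i < n \<Longrightarrow> g i = 1 \<or> g i = -1"
    and ph: "\<And>k. k < n \<Longrightarrow> pos k t = Some (h k)" and bij: "bij_betw h {..<n} {..<n}"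
    and nolink: "\<And>i j. i < n \<Longrightarrow> adj n c r i j \<Longrightarrow> \<not> at_link c f g i j t"
  shows "robots_in n c f g pos t ring_set = card {i. i < n \<and> on_ring i t}"
proof -
  have "robots_in n c f g pos t ring_set = card {i. i < n \<and> sched_pt c f g i t \<in> ring_set}"
    by (rule robots_in_bij_config[where pos=pos and t=t and h=h, OF ph bij])
  also have "{i. i < n \<and> sched_pt c f g i t \<in> ring_set} = {i. i < n \<and> on_ring i t}"
    using ring_set_mem_iff[OF disj gpm _ nolink] by blast
  finally show ?thesis .
qed

end

theorem corollary6:
  fixes n :: nat and c :: "nat \<Rightarrow> complex" and r :: real
    and f g :: "nat \<Rightarrow> real" and a b :: "complex set"
    and pos0 :: "nat \<Rightarrow> real \<Rightarrow> nat option" and t :: real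
  assumes "r > 0"
    and "disjoint_circles n c"
    and "is_cycle_graph n c r"
    and "sync_schedule n c r f g"
    and "{R. is_ring n c r f g R} = {a, b}" and "a \<noteq> b"
    and "partial_scs n c r f g pos0"
    and "\<forall>k<n. \<forall>s\<ge>0. pos0 k s \<noteq> None"
    and "t \<ge> 0"
    and "\<forall>k<n. \<forall>i j. pos0 k t = Some i \<longrightarrow> adj n c r i j \<longrightarrow> \<not> at_link c f g i j t"
  shows "starvation_number n c r f g
           = max (robots_in n c f g pos0 t a) (robots_in n c f g pos0 t b)"
proof -
  note disj = assms(2) and sync = assms(4) and t = assms(9)
  obtain cir y where "oriented_cycle n c r f g cir y" using cycle_oriented[OF disj assms(3) sync] by blast
  interpret O: oriented_cycle n c r f g cir y by fact
  interpret R: oriented_cycle n c r f g O.rev_cir O.rev_y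
    by (rule O.reversed_orientation)
  have gpm: "\<And>i. i < n \<Longrightarrow> g i = 1 \<or> g i = -1" using sync unfolding sync_schedule_def by blast
  obtain h where ph: "\<And>k. k < n \<Longrightarrow> pos0 k t = Some (h k)" and bij: "bij_betw h {..<n} {..<n}"
    using scs_config_bij[OF sync disj assms(7,8) t] by blast
  have nolink: "\<not> at_link c f g i j t" if "i < n" "adj n c r i j" for i j
  proof -
    obtain k where "k < n" "h k = i" using bij_betw_imp_surj_on[OF bij] \<open>i < n\<close> by (metis imageE lessThan_iff)
    then show ?thesis using assms(10) ph that(2) by blast
  qed
  have "is_ring n c r f g a" "is_ring n c r f g b" using assms(5) by auto
  then have "a = O.ring_set \<or> a = R.ring_set" "b = O.ring_set \<or> b = R.ring_set"
    using O.ring_is_ring_set[OF sync disj] by blast+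
  then have "(a = O.ring_set \<and> b = R.ring_set) \<or> (a = R.ring_set \<and> b = O.ring_set)"
    using assms(6) by blast
  moreover have "robots_in n c f g pos0 t O.ring_set = card {i. i < n \<and> O.on_ring i t}"
    by (rule O.robots_in_ring_set[where pos=pos0 and t=t, OF disj gpm ph bij nolink])
  moreover have "robots_in n c f g pos0 t R.ring_set = card {i. i < n \<and> O.on_rev_ring i t}"
    using R.robots_in_ring_set[where pos=pos0 and t=t, OF disj gpm ph bij nolink]
    unfolding O.on_ring_reversed .
  ultimately show ?thesis
    unfolding O.starvation_number_eq_max[OF sync disj t] by (auto simp: max.commute)
qed

end
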